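(* Let $S,T\subseteq(\Sigma\cup\Gamma)^*$ be regular languages of finite shiftlag such that $\mathit{maxsync}(T,T)$ is regular. Then $\llbracket S\rrbracket\in\textsc{Rel}(T)$ if and only if $\mathit{maxsync}(S,T)$ is regular and $\llbracket S\rrbracket\subseteq\llbracket T\rrbracket$.
   Context: $\Sigma,\Gamma$ are disjoint finite alphabets. For $w\in(\Sigma\cup\Gamma)^*$, $\llbracket w\rrbracket=(\pi_{\mathtt i}(w),\pi_{\mathtt o}(w))$ where $\pi_{\mathtt i}$ (resp. $\pi_{\mathtt o}$) deletes all letters of $\Gamma$ (resp. $\Sigma$), and $\llbracket L\rrbracket=\{\llbracket w\rrbracket:w\in L\}$. $\textsc{Rel}(T)=\{\llbracket T'\rrbracket: T'\subseteq T,\ T'\text{ regular}\}$. A position $i$ of $w$ is $\geq k$-lagged if the absolute difference between the numbers of $\Sigma$-letters and $\Gamma$-letters in $w[1..i]$ is at least $k$. A shift of $w$ is a position $i\in\{1,\dots,|w|-1\}$ with exactly one of $w[i],w[i+1]$ in $\Sigma$; shifts $i<j$ are consecutive if no shift lies strictly between them. $\mathit{shift}(w)$ is the number of shifts; $\mathit{shiftlag}(w)$ is the maximal $n$ such that $w$ contains $n$ consecutive shifts all $\geq n$-lagged. A language has finite shift (resp. finite shiftlag) if the supremum of $\mathit{shift}$ (resp. $\mathit{shiftlag}$) over its words is finite; $\mathrm{Reg}_{\mathsf{FS}}$ denotes the class of regular languages of finite shift. For $x\in(\Sigma\cup\Gamma)^*$, $x^{-1}T=\{z: xz\in T\}$,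 and $w[1,i]$ is the prefix of $w$ of length $i$. For $w,w'\in T$ with $\llbracket w\rrbracket=\llbracket w'\rrbracket$, write $w\preceq_T w'$ if for all $i\le|w|$, $(w'[1,i])^{-1}T\in\mathrm{Reg}_{\mathsf{FS}}$ implies $(w[1,i])^{-1}T\in\mathrm{Reg}_{\mathsf{FS}}$. For languages $S,T$, $\mathit{maxsync}(S,T)=\{w\in T:\llbracket w\rrbracket\in\llbracket S\rrbracket,\ w'\preceq_T w\text{ for all }w'\in T\text{ with }\llbracket w'\rrbracket=\llbracket w\rrbracket\}$. *)

theory Defs
  imports Main
begin

definition regular :: "'a set \<Rightarrow> 'a list set \<Rightarrow> bool" where
  "regular A L \<longleftrightarrow> L \<subseteq> lists A \<and>
     (\<exists>(Q::nat set) q0 \<delta> F. finite Q \<and> q0 \<in> Q \<and> F \<subseteq> Q \<and>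
        (\<forall>q\<in>Q. \<forall>a\<in>A. \<delta> q a \<in> Q) \<and> L = {w \<in> lists A. foldl \<delta> q0 w \<in> F})"

definition sem :: "'a set \<Rightarrow> 'a set \<Rightarrow> 'a list \<Rightarrow> 'a list \<times> 'a list" where
  "sem Sig Gam w = (filter (\<lambda>x. x \<in> Sig) w, filter (\<lambda>x. x \<in> Gam) w)"

definition semL :: "'a set \<Rightarrow> 'a set \<Rightarrow> 'a list set \<Rightarrow> ('a list \<times> 'a list) set" where
  "semL Sig Gam L = sem Sig Gam ` L"

definition Rel :: "'a set \<Rightarrow> 'a set \<Rightarrow> 'a list set \<Rightarrow> ('a list \<times> 'a list) set set" where
  "Rel Sig Gam T = {semL Sig Gam T' | T'. T' \<subseteq> T \<and> regular (Sig \<union> Gam) T'}"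

text \<open>Position i (1-based) of w is >= k-lagged.\<close>
definition lagged :: "'a set \<Rightarrow> 'a set \<Rightarrow> 'a list \<Rightarrow> nat \<Rightarrow> nat \<Rightarrow> bool" where
  "lagged Sig Gam w i k \<longleftrightarrow>
     \<bar>int (length (filter (\<lambda>x. x \<in> Sig) (take i w))) - int (length (filter (\<lambda>x. x \<in> Gam) (take i w)))\<bar> \<ge> int k"

text \<open>Shifts of w: positions i in 1..|w|-1 (1-based) with exactly one of w[i], w[i+1] in Sig.\<close>
definition shifts :: "'a set \<Rightarrow> 'a list \<Rightarrow> nat set" where
  "shifts Sig w = {i. 1 \<le> i \<and> i < length w \<and> ((w ! (i - 1) \<in> Sig) \<noteq> (w ! i \<in> Sig))}"

definition shift :: "'a set \<Rightarrow> 'a list \<Rightarrow> nat" where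
  "shift Sig w = card (shifts Sig w)"

text \<open>w contains n consecutive shifts, all >= n-lagged (consecutive shifts = all shifts in an interval).\<close>
definition has_shiftlag :: "'a set \<Rightarrow> 'a set \<Rightarrow> 'a list \<Rightarrow> nat \<Rightarrow> bool" where
  "has_shiftlag Sig Gam w n \<longleftrightarrow>
     (\<exists>a b. card {p \<in> shifts Sig w. a \<le> p \<and> p \<le> b} = n \<and>
            (\<forall>p \<in> shifts Sig w. a \<le> p \<and> p \<le> b \<longrightarrow> lagged Sig Gam w p n))"

definition shiftlag :: "'a set \<Rightarrow> 'a set \<Rightarrow> 'a list \<Rightarrow> nat" where
  "shiftlag Sig Gam w = Max {n. has_shiftlag Sig Gam w n}"

definition finite_shift :: "'a set \<Rightarrow> 'a list set \<Rightarrow> bool" where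
  "finite_shift Sig L \<longleftrightarrow> (\<exists>N. \<forall>w\<in>L. shift Sig w \<le> N)"

definition finite_shiftlag :: "'a set \<Rightarrow> 'a set \<Rightarrow> 'a list set \<Rightarrow> bool" where
  "finite_shiftlag Sig Gam L \<longleftrightarrow> (\<exists>N. \<forall>w\<in>L. shiftlag Sig Gam w \<le> N)"

definition RegFS :: "'a set \<Rightarrow> 'a set \<Rightarrow> 'a list set \<Rightarrow> bool" where
  "RegFS Sig Gam L \<longleftrightarrow> regular (Sig \<union> Gam) L \<and> finite_shift Sig L"

definition lquot :: "'a list \<Rightarrow> 'a list set \<Rightarrow> 'a list set" where
  "lquot x T = {z. x @ z \<in> T}"

definition preceq :: "'a set \<Rightarrow> 'a set \<Rightarrow> 'a list set \<Rightarrow> 'a list \<Rightarrow> 'a list \<Rightarrow> bool" where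
  "preceq Sig Gam T w w' \<longleftrightarrow> w \<in> T \<and> w' \<in> T \<and> sem Sig Gam w = sem Sig Gam w' \<and>
     (\<forall>i \<le> length w. RegFS Sig Gam (lquot (take i w') T) \<longrightarrow> RegFS Sig Gam (lquot (take i w) T))"

definition maxsync :: "'a set \<Rightarrow> 'a set \<Rightarrow> 'a list set \<Rightarrow> 'a list set \<Rightarrow> 'a list set" where
  "maxsync Sig Gam S T = {w \<in> T. sem Sig Gam w \<in> semL Sig Gam S \<and>
     (\<forall>w' \<in> T. sem Sig Gam w' = sem Sig Gam w \<longrightarrow> preceq Sig Gam T w' w)}"

end

theory Submission
  imports Defs
begin

text \<open>
  (\<open>\<Leftarrow>\<close>) For a fixed pair of \<open>\<lbrakk>T\<rbrakk>\<close>, the positions at which a witness \<open>w \<in> T\<close> has a quotient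
  in \<open>Reg\<^sub>F\<^sub>S\<close> form a final segment of \<open>{0..|w|}\<close>, so a witness with the fewest of them is
  \<open>\<preceq>\<^sub>T\<close>-maximal. Hence, when \<open>\<lbrakk>S\<rbrakk> \<subseteq> \<lbrakk>T\<rbrakk>\<close>, the language \<open>maxsync(S, T) \<subseteq> T\<close> has relation \<open>\<lbrakk>S\<rbrakk>\<close>.

  (\<open>\<Rightarrow>\<close>) Let \<open>T' \<subseteq> T\<close> be regular with \<open>\<lbrakk>T'\<rbrakk> = \<lbrakk>S\<rbrakk>\<close>. Pumping a loop of the automaton of \<open>T\<close>
  that changes the lag shows, by finite shiftlag, that a prefix of lag at least some \<open>C\<close> leaves
  a quotient of finite shift. So a maximal \<open>w\<close> and a witness \<open>w' \<in> T'\<close> stay within lag \<open>C\<close>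
  until the quotient of \<open>T\<close> by the prefix of \<open>w'\<close> has shift at most some \<open>B\<close>. From there on the
  remainder of \<open>T'\<close> has a recognizable relation (a finite union of products of regular
  languages), obtained by splitting off alternating blocks. An automaton can therefore check,
  with finitely many states, that a word is synchronised in this way with some word of \<open>T'\<close>,
  and \<open>maxsync(S, T)\<close> is the intersection of \<open>maxsync(T, T)\<close> with the language it accepts.
\<close>

section \<open>Regular languages via left quotients\<close>

definition quotients :: "'a set \<Rightarrow> 'a list set \<Rightarrow> 'a list set set" where
  "quotients A L = {lquot x L | x. x \<in> lists A}"

lemma lquot_Nil [simp]: "lquot [] L = L"
  by (simp add: lquot_def)

lemma lquot_append: "lquot (x @ y) L = lquot y (lquot x L)"
  by (simp add: lquot_def)

lemma lquot_in_quotients: "x \<in> lists A \<Longrightarrow> lquot x L \<in> quotients A L"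
  by (auto simp: quotients_def)

lemma regular_subset_lists: "regular A L \<Longrightarrow> L \<subseteq> lists A"
  by (simp add: regular_def)

lemma finite_quotients_if_regular:
  assumes "regular A L"
  shows "finite (quotients A L)"
proof -
  obtain Q :: "nat set" and q0 \<delta> F where fin: "finite Q" and q0: "q0 \<in> Q"
    and closed: "\<forall>q\<in>Q. \<forall>a\<in>A. \<delta> q a \<in> Q" and L: "L = {w \<in> lists A. foldl \<delta> q0 w \<in> F}"
    using assms unfolding regular_def by blast
  have run_in_Q: "foldl \<delta> q x \<in> Q" if "q \<in> Q" "x \<in> lists A" for q x
    using that by (induction x arbitrary: q) (auto simp: closed)
  have "quotients A L \<subseteq> (\<lambda>q. {z \<in> lists A. foldl \<delta> q z \<in> F}) ` Q"
  proof
    fix K assume "K \<in> quotients A L"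
    then obtain x where x: "x \<in> lists A" "K = lquot x L" by (auto simp: quotients_def)
    then have "K = {z \<in> lists A. foldl \<delta> (foldl \<delta> q0 x) z \<in> F}"
      by (auto simp: L lquot_def)
    then show "K \<in> (\<lambda>q. {z \<in> lists A. foldl \<delta> q z \<in> F}) ` Q"
      using run_in_Q[OF q0 x(1)] by blast
  qed
  then show ?thesis using fin finite_surj by blast
qed

text \<open>The converse is the Myhill--Nerode construction: the quotients, numbered by some
  injection into \<open>nat\<close>, are the states.\<close>

lemma regular_if_finite_quotients:
  assumes sub: "L \<subseteq> lists A" and fin: "finite (quotients A L)"
  shows "regular A L"
proof -
  let ?E = "quotients A L"
  obtain f :: "'a list set \<Rightarrow> nat" and n where f: "f ` ?E = {i. i < n}" "inj_on f ?E"
    using finite_imp_inj_to_nat_seg[OF fin] by blast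
  define g where "g = inv_into ?E f"
  define \<delta> where "\<delta> q a = f (lquot [a] (g q))" for q a
  define F where "F = f ` {K \<in> ?E. [] \<in> K}"
  have gf: "g (f K) = K" if "K \<in> ?E" for K
    using that f(2) by (simp add: g_def)
  have run: "foldl \<delta> (f L) x = f (lquot x L)" if "x \<in> lists A" for x
    using that
  proof (induction x rule: rev_induct)
    case (snoc a x)
    then show ?case by (simp add: \<delta>_def gf lquot_in_quotients lquot_append)
  qed simp
  have closed: "\<forall>q\<in>f ` ?E. \<forall>a\<in>A. \<delta> q a \<in> f ` ?E"
  proof (intro ballI)
    fix q a assume "q \<in> f ` ?E" "a \<in> A"
    then obtain x where x: "x \<in> lists A" "q = f (lquot x L)" "x @ [a] \<in> lists A"
      by (auto simp: quotients_def)
    then have "\<delta> q a = f (lquot (x @ [a]) L)"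
      by (simp add: \<delta>_def gf lquot_in_quotients lquot_append)
    then show "\<delta> q a \<in> f ` ?E" using lquot_in_quotients[OF x(3)] by auto
  qed
  have accept: "w \<in> L \<longleftrightarrow> foldl \<delta> (f L) w \<in> F" if "w \<in> lists A" for w
  proof -
    have "foldl \<delta> (f L) w \<in> F \<longleftrightarrow> (\<exists>K\<in>?E. [] \<in> K \<and> f (lquot w L) = f K)"
      using run[OF that] by (auto simp: F_def)
    also have "\<dots> \<longleftrightarrow> [] \<in> lquot w L"
      using f(2) lquot_in_quotients[OF that] by (auto dest: inj_onD)
    finally show ?thesis by (simp add: lquot_def)
  qed
  have "L = {w \<in> lists A. foldl \<delta> (f L) w \<in> F}"
    using sub accept by blast
  moreover have "f L \<in> f ` ?E" "F \<subseteq> f ` ?E" "finite (f ` ?E)"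
    using lquot_in_quotients[of "[]" A L] fin by (auto simp: F_def)
  ultimately show ?thesis
    unfolding regular_def using closed sub by blast
qed

lemma regular_if_quotients_among:
  assumes "L \<subseteq> lists A" and "finite D" and "\<And>x. x \<in> lists A \<Longrightarrow> \<exists>d\<in>D. lquot x L = H d"
  shows "regular A L"
proof -
  have "quotients A L \<subseteq> H ` D" using assms(3) by (force simp: quotients_def)
  then have "finite (quotients A L)" using assms(2) finite_surj by blast
  then show ?thesis by (rule regular_if_finite_quotients[OF assms(1)])
qed

lemma regular_lquot:
  assumes "regular A L"
  shows "regular A (lquot x L)"
proof (rule regular_if_quotients_among[where D = "insert {} (quotients A L)" and H = id])
  have sub: "L \<subseteq> lists A" using assms by (rule regular_subset_lists)
  then show "lquot x L \<subseteq> lists A" by (auto simp: lquot_def)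
  show "finite (insert {} (quotients A L))"
    using assms by (simp add: finite_quotients_if_regular)
  fix y assume y: "y \<in> lists A"
  show "\<exists>d\<in>insert {} (quotients A L). lquot y (lquot x L) = id d"
  proof (cases "x \<in> lists A")
    case True
    then show ?thesis using y lquot_in_quotients[of "x @ y" A L] by (simp add: lquot_append)
  next
    case False
    then have "lquot y (lquot x L) = {}" using sub by (auto simp: lquot_def)
    then show ?thesis by simp
  qed
qed

lemma regular_Int:
  assumes "regular A L1" "regular A L2"
  shows "regular A (L1 \<inter> L2)"
proof (rule regular_if_quotients_among[where D = "quotients A L1 \<times> quotients A L2"
      and H = "\<lambda>(K1, K2). K1 \<inter> K2"])
  show "L1 \<inter> L2 \<subseteq> lists A" using assms regular_subset_lists by blast
  show "finite (quotients A L1 \<times> quotients A L2)"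
    using assms by (simp add: finite_quotients_if_regular)
  fix x assume "x \<in> lists A"
  then show "\<exists>d\<in>quotients A L1 \<times> quotients A L2. lquot x (L1 \<inter> L2) = (case d of (K1, K2) \<Rightarrow> K1 \<inter> K2)"
    by (intro bexI[of _ "(lquot x L1, lquot x L2)"]) (auto simp: lquot_def quotients_def)
qed

lemma regular_Nil: "regular A {[]}"
proof (rule regular_if_quotients_among[where D = "{{[]}, {}}" and H = id])
  fix x show "\<exists>d\<in>{{[]}, {}}. lquot x {[]} = id d" by (cases x) (auto simp: lquot_def)
qed auto

definition conc :: "'a list set \<Rightarrow> 'a list set \<Rightarrow> 'a list set" where
  "conc L1 L2 = {u @ v | u v. u \<in> L1 \<and> v \<in> L2}"

lemma lquot_conc:
  "lquot x (conc L1 L2) = conc (lquot x L1) L2 \<union> \<Union>{lquot x2 L2 | x1 x2. x = x1 @ x2 \<and> x1 \<in> L1}"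
proof (intro set_eqI iffI)
  fix z assume "z \<in> lquot x (conc L1 L2)"
  then obtain u v where uv: "x @ z = u @ v" "u \<in> L1" "v \<in> L2" by (auto simp: lquot_def conc_def)
  then obtain us where "x = u @ us \<and> us @ z = v \<or> x @ us = u \<and> z = us @ v"
    by (auto simp: append_eq_append_conv2)
  then show "z \<in> conc (lquot x L1) L2 \<union> \<Union>{lquot x2 L2 | x1 x2. x = x1 @ x2 \<and> x1 \<in> L1}"
  proof
    assume "x = u @ us \<and> us @ z = v"
    then show ?thesis using uv by (auto simp: lquot_def)
  next
    assume "x @ us = u \<and> z = us @ v"
    then show ?thesis using uv by (auto simp: lquot_def conc_def)
  qed
next
  fix z assume "z \<in> conc (lquot x L1) L2 \<union> \<Union>{lquot x2 L2 | x1 x2. x = x1 @ x2 \<and> x1 \<in> L1}"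
  then show "z \<in> lquot x (conc L1 L2)"
    by (auto simp: lquot_def conc_def) (metis append.assoc)+
qed

lemma regular_conc:
  assumes "regular A L1" "regular A L2"
  shows "regular A (conc L1 L2)"
proof (rule regular_if_quotients_among[where D = "quotients A L1 \<times> Pow (quotients A L2)"
      and H = "\<lambda>(K, S). conc K L2 \<union> \<Union>S"])
  show "conc L1 L2 \<subseteq> lists A" using assms regular_subset_lists by (fastforce simp: conc_def)
  show "finite (quotients A L1 \<times> Pow (quotients A L2))"
    using assms by (simp add: finite_quotients_if_regular)
  fix x assume x: "x \<in> lists A"
  let ?S = "{lquot x2 L2 | x1 x2. x = x1 @ x2 \<and> x1 \<in> L1}"
  have "?S \<subseteq> quotients A L2" using x by (auto simp: quotients_def)
  then show "\<exists>d\<in>quotients A L1 \<times> Pow (quotients A L2).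
      lquot x (conc L1 L2) = (case d of (K, S) \<Rightarrow> conc K L2 \<union> \<Union>S)"
    using x by (intro bexI[of _ "(lquot x L1, ?S)"]) (auto simp: lquot_conc lquot_in_quotients)
qed

abbreviation prj :: "'a set \<Rightarrow> 'a list \<Rightarrow> 'a list" where
  "prj X w \<equiv> filter (\<lambda>x. x \<in> X) w"

lemma prj_eq_self_if_lists: "b \<in> lists X \<Longrightarrow> prj X b = b"
  by (induction b) auto

lemma prj_eq_Nil_if_lists_disjoint: "b \<in> lists X \<Longrightarrow> X \<inter> Y = {} \<Longrightarrow> prj Y b = []"
  by (induction b) auto

lemma length_eq_length_prj_add: 
  "w \<in> lists (X \<union> Y) \<Longrightarrow> X \<inter> Y = {} \<Longrightarrow> length w = length (prj X w) + length (prj Y w)"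
  by (induction w) auto

lemma length_eq_if_sem_eq:
  assumes "w \<in> lists (X \<union> Y)" "w' \<in> lists (X \<union> Y)" "X \<inter> Y = {}" "sem X Y w = sem X Y w'"
  shows "length w = length w'"
  using length_eq_length_prj_add[OF assms(1,3)] length_eq_length_prj_add[OF assms(2,3)] assms(4)
  by (simp add: sem_def)

lemma finite_shifts [simp]: "finite (shifts X w)"
  by (rule finite_subset[of _ "{..<length w}"]) (auto simp: shifts_def)

lemma shifts_append_window:
  "{p \<in> shifts X (y @ z). length y + 1 \<le> p \<and> p \<le> length y + length z} = (\<lambda>i. i + length y) ` shifts X z"
proof -
  have nth: "(y @ z) ! (i + length y - 1) = z ! (i - 1)" "(y @ z) ! (i + length y) = z ! i"
    if "1 \<le> i" for i
  proof -
    have "i + length y - 1 = (i - 1) + length y" using that by simp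
    then show "(y @ z) ! (i + length y - 1) = z ! (i - 1)" by (simp add: nth_append)
  qed (simp add: nth_append)
  show ?thesis
  proof (intro set_eqI iffI)
    fix p assume p: "p \<in> {p \<in> shifts X (y @ z). length y + 1 \<le> p \<and> p \<le> length y + length z}"
    then have "p - length y \<in> shifts X z" "p = (p - length y) + length y"
      using nth[of "p - length y"] by (auto simp: shifts_def)
    then show "p \<in> (\<lambda>i. i + length y) ` shifts X z" by blast
  next
    fix p assume "p \<in> (\<lambda>i. i + length y) ` shifts X z"
    then obtain i where "i \<in> shifts X z" "p = i + length y" by blast
    then show "p \<in> {p \<in> shifts X (y @ z). length y + 1 \<le> p \<and> p \<le> length y + length z}"
      using nth[of i] by (auto simp: shifts_def)
  qed
qed

lemma shifts_append_right: "(\<lambda>i. i + length y) ` shifts X z \<subseteq> shifts X (y @ z)"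
  using shifts_append_window by blast

lemma shift_le_shift_append: "shift X z \<le> shift X (y @ z)"
proof -
  have "shift X z = card ((\<lambda>i. i + length y) ` shifts X z)"
    by (simp add: shift_def card_image inj_on_def)
  also have "\<dots> \<le> shift X (y @ z)"
    unfolding shift_def by (rule card_mono[OF finite_shifts shifts_append_right])
  finally show ?thesis .
qed

lemma Suc_shift_le_shift_block_append:
  assumes b: "b \<in> lists X" "b \<noteq> []" and r: "r \<noteq> []" "hd r \<notin> X"
  shows "Suc (shift X r) \<le> shift X (b @ r)"
proof -
  have "(b @ r) ! (length b - 1) = last b" "(b @ r) ! length b = hd r"
    using b r by (simp_all add: nth_append last_conv_nth hd_conv_nth)
  moreover have "last b \<in> X" using b by auto
  ultimately have new: "length b \<in> shifts X (b @ r)"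
    using b r by (auto simp: shifts_def Suc_le_eq)
  have old: "length b \<notin> (\<lambda>i. i + length b) ` shifts X r"
    by (auto simp: shifts_def)
  have "Suc (shift X r) = card (insert (length b) ((\<lambda>i. i + length b) ` shifts X r))"
    using old by (simp add: card_image inj_on_def shift_def)
  also have "\<dots> \<le> shift X (b @ r)"
    unfolding shift_def using new shifts_append_right[of b X r] by (intro card_mono) auto
  finally show ?thesis .
qed

lemma shifts_swap:
  assumes "w \<in> lists (X \<union> Y)" "X \<inter> Y = {}"
  shows "shifts Y w = shifts X w"
proof -
  have "\<And>i. i < length w \<Longrightarrow> (w ! i \<in> Y) = (w ! i \<notin> X)"
    using assms by (auto dest!: nth_mem)
  then show ?thesis unfolding shifts_def by (intro Collect_cong) (metis less_imp_diff_less)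
qed

section \<open>Relations of languages with bounded shift are recognizable\<close>

text \<open>A presentation of the relation of \<open>Q\<close> as a recognizable relation.\<close>

definition rdecomp :: "'a set \<Rightarrow> 'a set \<Rightarrow> 'a list set \<Rightarrow> ('a list set \<times> 'a list set) set \<Rightarrow> bool" where
  "rdecomp X Y Q I \<longleftrightarrow> finite I \<and> (\<forall>(U, V)\<in>I. regular X U \<and> regular Y V) \<and>
     semL X Y Q = (\<Union>(U, V)\<in>I. U \<times> V)"

definition nblocks :: "'a set \<Rightarrow> 'a list \<Rightarrow> nat" where
  "nblocks X w = (if w = [] then 0 else Suc (shift X w))"

definition starts_outside :: "'a set \<Rightarrow> 'a set \<Rightarrow> 'a list set" where
  "starts_outside X A = {r \<in> lists A. r = [] \<or> hd r \<notin> X}"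

lemma regular_starts_outside: "regular A (starts_outside X A)"
proof (rule regular_if_quotients_among[where D = "{starts_outside X A, lists A, {}}" and H = id])
  fix x assume "x \<in> lists A"
  then show "\<exists>d\<in>{starts_outside X A, lists A, {}}. lquot x (starts_outside X A) = id d"
    by (cases x) (auto simp: lquot_def starts_outside_def)
qed (auto simp: starts_outside_def)

lemma regular_blocks_with_lquot:
  assumes "regular A Q" "X \<subseteq> A"
  shows "regular X {b \<in> lists X. b \<noteq> [] \<and> lquot b Q \<inter> G = K}"
proof (rule regular_if_quotients_among[where D = "quotients A Q \<times> (UNIV :: bool set)"
      and H = "\<lambda>(K', e). {z \<in> lists X. (e \<or> z \<noteq> []) \<and> lquot z K' \<inter> G = K}"])
  show "finite (quotients A Q \<times> (UNIV :: bool set))"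
    using assms(1) by (simp add: finite_quotients_if_regular)
  fix y assume y: "y \<in> lists X"
  then have "lquot y Q \<in> quotients A Q" using assms(2) by (auto simp: quotients_def)
  moreover have "lquot y {b \<in> lists X. b \<noteq> [] \<and> lquot b Q \<inter> G = K}
      = {z \<in> lists X. (y \<noteq> [] \<or> z \<noteq> []) \<and> lquot z (lquot y Q) \<inter> G = K}"
    using y by (auto simp: lquot_def)
  ultimately show "\<exists>d\<in>quotients A Q \<times> UNIV. lquot y {b \<in> lists X. b \<noteq> [] \<and> lquot b Q \<inter> G = K}
      = (case d of (K', e) \<Rightarrow> {z \<in> lists X. (e \<or> z \<noteq> []) \<and> lquot z K' \<inter> G = K})"
    by (intro bexI[of _ "(lquot y Q, y \<noteq> [])"]) auto
qed auto

lemma nblocks_le_if_block_append: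
  assumes "b \<in> lists X" "b \<noteq> []" "r \<in> starts_outside X A" "nblocks X (b @ r) \<le> Suc N"
  shows "nblocks X r \<le> N"
proof (cases "r = []")
  case False
  then have "Suc (shift X r) \<le> shift X (b @ r)"
    using assms by (intro Suc_shift_le_shift_block_append) (auto simp: starts_outside_def)
  then show ?thesis using False assms(2,4) by (simp add: nblocks_def)
qed (simp add: nblocks_def)

lemma semL_leading_block:
  assumes disj: "X \<inter> Y = {}" and sub: "Q \<subseteq> lists (X \<union> Y)"
  shows "semL X Y {v \<in> Q. v \<noteq> [] \<and> hd v \<in> X} =
    {(b @ \<alpha>, \<beta>) | b \<alpha> \<beta>. b \<in> lists X \<and> b \<noteq> [] \<and>
       (\<alpha>, \<beta>) \<in> semL X Y (lquot b Q \<inter> starts_outside X (X \<union> Y))}"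
proof (intro set_eqI iffI)
  fix ab assume "ab \<in> semL X Y {v \<in> Q. v \<noteq> [] \<and> hd v \<in> X}"
  then obtain v where v: "v \<in> Q" "v \<noteq> []" "hd v \<in> X" "ab = sem X Y v" by (auto simp: semL_def)
  define b where "b = takeWhile (\<lambda>x. x \<in> X) v"
  define r where "r = dropWhile (\<lambda>x. x \<in> X) v"
  have vbr: "v = b @ r" by (simp add: b_def r_def)
  have b: "b \<in> lists X" "b \<noteq> []"
    using v(2,3) by (auto simp: b_def dest: set_takeWhileD) (cases v; simp)
  have "r \<in> starts_outside X (X \<union> Y)"
    using sub v(1) hd_dropWhile[of "\<lambda>x. x \<in> X" v]
    by (auto simp: starts_outside_def r_def dest: set_dropWhileD)
  then have "r \<in> lquot b Q \<inter> starts_outside X (X \<union> Y)"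
    using v(1) vbr by (auto simp: lquot_def)
  moreover have "ab = (b @ prj X r, prj Y r)"
    using v(4) vbr prj_eq_self_if_lists[OF b(1)] prj_eq_Nil_if_lists_disjoint[OF b(1) disj]
    by (simp add: sem_def)
  ultimately show "ab \<in> {(b @ \<alpha>, \<beta>) | b \<alpha> \<beta>. b \<in> lists X \<and> b \<noteq> [] \<and>
       (\<alpha>, \<beta>) \<in> semL X Y (lquot b Q \<inter> starts_outside X (X \<union> Y))}"
    using b by (auto simp: semL_def sem_def)
next
  fix ab assume "ab \<in> {(b @ \<alpha>, \<beta>) | b \<alpha> \<beta>. b \<in> lists X \<and> b \<noteq> [] \<and>
       (\<alpha>, \<beta>) \<in> semL X Y (lquot b Q \<inter> starts_outside X (X \<union> Y))}"
  then obtain b r where b: "b \<in> lists X" "b \<noteq> []" and r: "b @ r \<in> Q"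
    and ab: "ab = (b @ prj X r, prj Y r)"
    by (auto simp: semL_def sem_def lquot_def)
  have "sem X Y (b @ r) = ab"
    using ab prj_eq_self_if_lists[OF b(1)] prj_eq_Nil_if_lists_disjoint[OF b(1) disj]
    by (simp add: sem_def)
  moreover have "hd (b @ r) \<in> X" using b by (cases b) auto
  ultimately show "ab \<in> semL X Y {v \<in> Q. v \<noteq> [] \<and> hd v \<in> X}"
    using r b(2) unfolding semL_def by (intro image_eqI[of _ _ "b @ r"]) auto
qed

lemma prefixed_relation_eq_Union_products:
  assumes dec: "\<And>K. K \<in> g ` P \<Longrightarrow> rdecomp X Y K (f K)"
  shows "{(b @ \<alpha>, \<beta>) | b \<alpha> \<beta>. b \<in> P \<and> (\<alpha>, \<beta>) \<in> semL X Y (g b)} =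
    (\<Union>(U, V)\<in>(\<Union>K\<in>g ` P. (\<lambda>(U, V). (conc {b \<in> P. g b = K} U, V)) ` f K). U \<times> V)"
proof (intro set_eqI iffI)
  fix x assume "x \<in> {(b @ \<alpha>, \<beta>) | b \<alpha> \<beta>. b \<in> P \<and> (\<alpha>, \<beta>) \<in> semL X Y (g b)}"
  then obtain b \<alpha> \<beta> where x: "x = (b @ \<alpha>, \<beta>)" and b: "b \<in> P"
    and \<alpha>\<beta>: "(\<alpha>, \<beta>) \<in> semL X Y (g b)" by blast
  obtain U V where UV: "(U, V) \<in> f (g b)" "\<alpha> \<in> U" "\<beta> \<in> V"
    using dec[of "g b"] b \<alpha>\<beta> by (auto simp: rdecomp_def)
  have "x \<in> conc {b' \<in> P. g b' = g b} U \<times> V" using x b UV by (auto simp: conc_def)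
  then show "x \<in> (\<Union>(U, V)\<in>(\<Union>K\<in>g ` P. (\<lambda>(U, V). (conc {b \<in> P. g b = K} U, V)) ` f K). U \<times> V)"
    using b UV(1) by force
next
  fix x assume "x \<in> (\<Union>(U, V)\<in>(\<Union>K\<in>g ` P. (\<lambda>(U, V). (conc {b \<in> P. g b = K} U, V)) ` f K). U \<times> V)"
  then obtain K U V where K: "K \<in> g ` P" "(U, V) \<in> f K" and x: "x \<in> conc {b \<in> P. g b = K} U \<times> V"
    by auto
  then obtain b \<alpha> \<beta> where "x = (b @ \<alpha>, \<beta>)" "b \<in> P" "g b = K" "\<alpha> \<in> U" "\<beta> \<in> V"
    by (auto simp: conc_def)
  moreover have "U \<times> V \<subseteq> semL X Y K" using dec[OF K(1)] K(2) by (auto simp: rdecomp_def)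
  ultimately show "x \<in> {(b @ \<alpha>, \<beta>) | b \<alpha> \<beta>. b \<in> P \<and> (\<alpha>, \<beta>) \<in> semL X Y (g b)}"
    by blast
qed

lemma ex_rdecomp_leading_block:
  assumes disj: "X \<inter> Y = {}" and reg: "regular (X \<union> Y) Q"
    and bound: "\<forall>v\<in>Q. nblocks X v \<le> Suc N"
    and IH: "\<And>Q'. regular (X \<union> Y) Q' \<Longrightarrow> \<forall>v\<in>Q'. nblocks X v \<le> N \<Longrightarrow> \<exists>I. rdecomp X Y Q' I"
  shows "\<exists>I. rdecomp X Y {v \<in> Q. v \<noteq> [] \<and> hd v \<in> X} I"
proof -
  define G where "G = starts_outside X (X \<union> Y)"
  define P where "P = {b \<in> lists X. b \<noteq> []}"
  define cont where "cont b = lquot b Q \<inter> G" for b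
  have "cont ` P \<subseteq> (\<lambda>K. K \<inter> G) ` quotients (X \<union> Y) Q"
    by (auto simp: P_def cont_def quotients_def)
  then have fin: "finite (cont ` P)"
    by (rule finite_surj[OF finite_quotients_if_regular[OF reg]])
  have "\<exists>I. rdecomp X Y K I" if "K \<in> cont ` P" for K
  proof -
    from \<open>K \<in> cont ` P\<close> obtain b where "b \<in> P" and K: "K = cont b" by blast
    then have b: "b \<in> lists X" "b \<noteq> []" by (simp_all add: P_def)
    have "regular (X \<union> Y) K"
      unfolding K cont_def G_def by (intro regular_Int regular_lquot reg regular_starts_outside)
    moreover have "\<forall>r\<in>K. nblocks X r \<le> N"
      using K bound nblocks_le_if_block_append[OF b] by (auto simp: cont_def lquot_def G_def)
    ultimately show ?thesis using IH by blast
  qed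
  then obtain f where f: "\<And>K. K \<in> cont ` P \<Longrightarrow> rdecomp X Y K (f K)" by metis
  define I where "I = (\<Union>K\<in>cont ` P. (\<lambda>(U, V). (conc {b \<in> P. cont b = K} U, V)) ` f K)"
  have "semL X Y {v \<in> Q. v \<noteq> [] \<and> hd v \<in> X} =
      {(b @ \<alpha>, \<beta>) | b \<alpha> \<beta>. b \<in> P \<and> (\<alpha>, \<beta>) \<in> semL X Y (cont b)}"
    unfolding P_def cont_def G_def mem_Collect_eq conj_assoc
    by (rule semL_leading_block[OF disj regular_subset_lists[OF reg]])
  also have "\<dots> = (\<Union>(U, V)\<in>I. U \<times> V)"
    unfolding I_def by (rule prefixed_relation_eq_Union_products[OF f])
  finally have "semL X Y {v \<in> Q. v \<noteq> [] \<and> hd v \<in> X} = (\<Union>(U, V)\<in>I. U \<times> V)" .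
  moreover have "finite I"
    unfolding I_def using f by (intro finite_UN_I[OF fin] finite_imageI) (auto simp: rdecomp_def)
  moreover have "\<forall>(U, V)\<in>I. regular X U \<and> regular Y V"
  proof -
    have "{b \<in> P. cont b = K} = {b \<in> lists X. b \<noteq> [] \<and> lquot b Q \<inter> G = K}" for K
      by (auto simp: P_def cont_def)
    then have "regular X {b \<in> P. cont b = K}" for K
      using regular_blocks_with_lquot[OF reg] by simp
    then show ?thesis using f by (fastforce simp: I_def rdecomp_def intro: regular_conc)
  qed
  ultimately show ?thesis unfolding rdecomp_def by blast
qed

lemma rdecomp_Un: "rdecomp X Y Q1 I1 \<Longrightarrow> rdecomp X Y Q2 I2 \<Longrightarrow> rdecomp X Y (Q1 \<union> Q2) (I1 \<union> I2)"
  by (auto simp: rdecomp_def semL_def image_Un)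

lemma rdecomp_swap:
  assumes "rdecomp Y X Q I"
  shows "rdecomp X Y Q ((\<lambda>(U, V). (V, U)) ` I)"
proof -
  have "semL X Y Q = (\<lambda>(\<alpha>, \<beta>). (\<beta>, \<alpha>)) ` semL Y X Q"
    by (auto simp: semL_def sem_def image_image)
  then show ?thesis using assms by (auto simp: rdecomp_def)
qed

lemma rdecomp_Nil: "rdecomp X Y (Q \<inter> {[]}) (if [] \<in> Q then {({[]}, {[]})} else {})"
  by (auto simp: rdecomp_def semL_def sem_def regular_Nil)

lemma ex_rdecomp_if_nblocks_le:
  assumes "X \<inter> Y = {}" "regular (X \<union> Y) Q" "\<forall>v\<in>Q. nblocks X v \<le> N"
  shows "\<exists>I. rdecomp X Y Q I"
  using assms
proof (induction N arbitrary: X Y Q)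
  case 0
  then have "Q = Q \<inter> {[]}" by (auto simp: nblocks_def split: if_splits)
  then show ?case using rdecomp_Nil[of X Y Q] by metis
next
  case (Suc N)
  have sub: "Q \<subseteq> lists (X \<union> Y)" using Suc.prems(2) by (rule regular_subset_lists)
  obtain I1 where I1: "rdecomp X Y {v \<in> Q. v \<noteq> [] \<and> hd v \<in> X} I1"
    using ex_rdecomp_leading_block[OF Suc.prems Suc.IH[OF Suc.prems(1)]] by blast
  have "nblocks Y v = nblocks X v" if "v \<in> Q" for v
    using shifts_swap[of v X Y] that sub Suc.prems(1) by (simp add: nblocks_def shift_def subset_iff)
  then have bound: "\<forall>v\<in>Q. nblocks Y v \<le> Suc N" using Suc.prems(3) by simp
  have disj: "Y \<inter> X = {}" and reg: "regular (Y \<union> X) Q"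
    using Suc.prems(1,2) by (auto simp: Un_commute)
  obtain I2 where I2: "rdecomp Y X {v \<in> Q. v \<noteq> [] \<and> hd v \<in> Y} I2"
    using ex_rdecomp_leading_block[OF disj reg bound Suc.IH[OF disj]] by blast
  have "hd v \<in> X \<or> hd v \<in> Y" if "v \<in> Q" "v \<noteq> []" for v
    using that sub by (cases v) auto
  then have Q: "Q = (Q \<inter> {[]}) \<union> {v \<in> Q. v \<noteq> [] \<and> hd v \<in> X} \<union> {v \<in> Q. v \<noteq> [] \<and> hd v \<in> Y}"
    by blast
  show ?case
    using rdecomp_Un[OF rdecomp_Un[OF rdecomp_Nil I1] rdecomp_swap[OF I2]] by (subst Q) blast
qed

lemma ex_rdecomp_if_shift_le:
  assumes "X \<inter> Y = {}" "regular (X \<union> Y) Q" "\<forall>v\<in>Q. shift X v \<le> B"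
  shows "\<exists>I. rdecomp X Y Q I"
  using assms by (intro ex_rdecomp_if_nblocks_le[where N = "Suc B"]) (auto simp: nblocks_def)

definition lag :: "'a set \<Rightarrow> 'a set \<Rightarrow> 'a list \<Rightarrow> int" where
  "lag X Y w = int (length (prj X w)) - int (length (prj Y w))"

lemma lag_Nil [simp]: "lag X Y [] = 0"
  by (simp add: lag_def)

lemma lag_append [simp]: "lag X Y (x @ y) = lag X Y x + lag X Y y"
  by (simp add: lag_def)

lemma lag_swap: "lag Y X w = - lag X Y w"
  by (simp add: lag_def)

lemma lag_concat_replicate: "lag X Y (concat (replicate n x)) = int n * lag X Y x"
  by (induction n) (auto simp: algebra_simps)

lemma lagged_iff_abs_lag: "lagged X Y w i k \<longleftrightarrow> int k \<le> \<bar>lag X Y (take i w)\<bar>"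
  by (simp add: lagged_def lag_def)

lemma abs_lag_le_length: "\<bar>lag X Y w\<bar> \<le> int (length w)"
  using length_filter_le[of "\<lambda>x. x \<in> X" w] length_filter_le[of "\<lambda>x. x \<in> Y" w]
  unfolding lag_def by linarith

lemma abs_lag_single_le: "X \<inter> Y = {} \<Longrightarrow> \<bar>lag X Y [a]\<bar> \<le> 1"
  by (auto simp: lag_def)

lemma abs_lag_take_Suc_le:
  assumes "X \<inter> Y = {}"
  shows "\<bar>lag X Y (take (Suc m) u)\<bar> \<le> \<bar>lag X Y (take m u)\<bar> + 1"
proof (cases "m < length u")
  case True
  then have "lag X Y (take (Suc m) u) = lag X Y (take m u) + lag X Y [u ! m]"
    by (simp add: take_Suc_conv_app_nth)
  then show ?thesis using abs_lag_single_le[OF assms, of "u ! m"] by linarith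
qed simp

text \<open>A discrete intermediate value theorem: the lag changes by at most one per letter.\<close>

lemma lag_take_ivt:
  assumes "X \<inter> Y = {}"
  shows "0 \<le> l \<Longrightarrow> l \<le> lag X Y w \<Longrightarrow> \<exists>p\<le>length w. lag X Y (take p w) = l"
proof (induction w arbitrary: l rule: rev_induct)
  case (snoc a w)
  show ?case
  proof (cases "l \<le> lag X Y w")
    case True
    then obtain p where "p \<le> length w" "lag X Y (take p w) = l" using snoc by blast
    then show ?thesis by (intro exI[of _ p]) auto
  next
    case False
    then have "l = lag X Y (w @ [a])"
      using abs_lag_single_le[OF assms, of a] snoc.prems(2) by (simp add: abs_le_iff)
    then show ?thesis by (intro exI[of _ "length (w @ [a])"]) auto
  qed
qed auto

lemma card_lags_of_prefixes_ge:
  assumes "X \<inter> Y = {}"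
  shows "nat \<bar>lag X Y w\<bar> + 1 \<le> card ((\<lambda>p. lag X Y (take p w)) ` {0..length w})"
proof -
  let ?S = "(\<lambda>p. lag X Y (take p w)) ` {0..length w}"
  have "{0..lag X Y w} \<subseteq> ?S"
    using lag_take_ivt[OF assms] by (force simp: image_iff)
  moreover have "{lag X Y w..0} \<subseteq> ?S"
  proof
    fix l assume "l \<in> {lag X Y w..0}"
    then obtain p where "p \<le> length w" "lag Y X (take p w) = - l"
      using lag_take_ivt[of Y X "- l" w] assms by (auto simp: lag_swap[of Y X])
    then show "l \<in> ?S" by (force simp: lag_swap[of Y X])
  qed
  ultimately show ?thesis
    by (cases "0 \<le> lag X Y w") (auto dest!: card_mono[rotated] simp: finite_imageI)
qed

section \<open>Large lag forces bounded shift\<close>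

lemma card_image_le_if_factors:
  assumes "finite P" "\<And>p p'. p \<in> P \<Longrightarrow> p' \<in> P \<Longrightarrow> g p = g p' \<Longrightarrow> s p = s p'"
  shows "card (s ` P) \<le> card (g ` P)"
proof -
  define f where "f K = s (SOME p. p \<in> P \<and> g p = K)" for K
  have "s p = f (g p)" if p: "p \<in> P" for p
  proof -
    have "\<exists>q. q \<in> P \<and> g q = g p" using p by blast
    then have "(SOME q. q \<in> P \<and> g q = g p) \<in> P \<and> g (SOME q. q \<in> P \<and> g q = g p) = g p"
      by (rule someI_ex)
    then show ?thesis unfolding f_def by (metis assms(2) p)
  qed
  then have "s ` P = f ` g ` P" unfolding image_image by (rule image_cong[OF refl])
  then show ?thesis using card_image_le[OF finite_imageI[OF assms(1)], of f g] by simp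
qed

text \<open>Pigeonhole: more lag values than quotients yield a factor that loops in the automaton
  of \<open>T\<close> while changing the lag.\<close>

lemma lag_changing_loop:
  assumes disj: "X \<inter> Y = {}" and fin: "finite (quotients A T)" and x: "x \<in> lists A"
    and big: "int (card (quotients A T)) \<le> \<bar>lag X Y x\<bar>"
  obtains x1 x2 x3 where "x = x1 @ x2 @ x3" "lquot (x1 @ x2) T = lquot x1 T" "lag X Y x2 \<noteq> 0"
proof -
  define s where "s p = lag X Y (take p x)" for p
  define g where "g p = lquot (take p x) T" for p
  let ?P = "{0..length x}"
  have "\<exists>p p'. p < p' \<and> p' \<le> length x \<and> g p = g p' \<and> s p \<noteq> s p'"
  proof (rule ccontr)
    assume loopless: "\<not> (\<exists>p p'. p < p' \<and> p' \<le> length x \<and> g p = g p' \<and> s p \<noteq> s p')"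
    have "card (s ` ?P) \<le> card (g ` ?P)"
    proof (rule card_image_le_if_factors)
      fix p p' assume "p \<in> ?P" "p' \<in> ?P" "g p = g p'"
      then show "s p = s p'" using loopless by (cases p p' rule: linorder_cases) (auto, metis)
    qed simp
    also have "\<dots> \<le> card (quotients A T)"
      using x fin by (intro card_mono) (auto simp: g_def quotients_def dest: in_set_takeD)
    finally show False
      using card_lags_of_prefixes_ge[OF disj, of x] big unfolding s_def by linarith
  qed
  then obtain p p' where pp: "p < p'" "p' \<le> length x" "g p = g p'" "s p \<noteq> s p'" by blast
  define x1 where "x1 = take p x"
  define x2 where "x2 = drop p (take p' x)"
  have x1x2: "take p' x = x1 @ x2"
    using pp(1) by (metis x1_def x2_def append_take_drop_id min.absorb1 less_imp_le take_take)
  show thesis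
  proof
    show "x = x1 @ x2 @ drop p' x" by (metis x1x2 append.assoc append_take_drop_id)
    show "lquot (x1 @ x2) T = lquot x1 T" using pp(3) x1x2 by (simp add: g_def x1_def)
    show "lag X Y x2 \<noteq> 0" using pp(4) x1x2 by (simp add: s_def x1_def)
  qed
qed

lemma lquot_append_power:
  assumes "lquot (x1 @ x2) T = lquot x1 T"
  shows "lquot (x1 @ concat (replicate n x2)) T = lquot x1 T"
proof (induction n)
  case (Suc n)
  have "lquot (x1 @ concat (replicate (Suc n) x2)) T = lquot (concat (replicate n x2)) (lquot (x1 @ x2) T)"
    by (simp flip: lquot_append)
  also have "\<dots> = lquot (x1 @ concat (replicate n x2)) T"
    unfolding assms by (rule lquot_append[symmetric])
  finally show ?case using Suc by simp
qed simp

lemma le_shiftlag_if_has_shiftlag: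
  assumes "has_shiftlag X Y w m"
  shows "m \<le> shiftlag X Y w"
proof -
  have "{n. has_shiftlag X Y w n} \<subseteq> {..length w}"
  proof
    fix n assume "n \<in> {n. has_shiftlag X Y w n}"
    then obtain a b where "card {p \<in> shifts X w. a \<le> p \<and> p \<le> b} = n"
      by (auto simp: has_shiftlag_def)
    moreover have "card {p \<in> shifts X w. a \<le> p \<and> p \<le> b} \<le> card {..<length w}"
      by (rule card_mono) (auto simp: shifts_def)
    ultimately show "n \<in> {..length w}" by simp
  qed
  then have "finite {n. has_shiftlag X Y w n}" using finite_subset by blast
  then show ?thesis using assms unfolding shiftlag_def by (simp add: Max_ge)
qed

text \<open>All shifts of \<open>z\<close> are then consecutive shifts of \<open>y @ z\<close> that are
  \<open>shift X z\<close>-lagged.\<close>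

lemma shift_le_shiftlag_if_lag_ge:
  assumes "int (shift X z + length z) \<le> \<bar>lag X Y y\<bar>"
  shows "shift X z \<le> shiftlag X Y (y @ z)"
proof (rule le_shiftlag_if_has_shiftlag)
  let ?W = "{p \<in> shifts X (y @ z). length y + 1 \<le> p \<and> p \<le> length y + length z}"
  have "card ?W = shift X z"
    unfolding shifts_append_window shift_def by (simp add: card_image inj_on_def)
  moreover have "lagged X Y (y @ z) p (shift X z)" if "p \<in> ?W" for p
  proof -
    from that have "p \<in> (\<lambda>i. i + length y) ` shifts X z" by (simp only: shifts_append_window)
    then obtain i where "p = i + length y" by blast
    then have "lag X Y (take p (y @ z)) = lag X Y y + lag X Y (take i z)" by simp
    moreover have "\<bar>lag X Y (take i z)\<bar> \<le> int (length z)"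
      using abs_lag_le_length[of X Y "take i z"] by simp
    ultimately show ?thesis using assms unfolding lagged_iff_abs_lag by linarith
  qed
  ultimately show "has_shiftlag X Y (y @ z) (shift X z)"
    unfolding has_shiftlag_def by (intro exI[of _ "length y + 1"] exI[of _ "length y + length z"]) blast
qed

text \<open>Pumping a lag-changing loop makes the lag of the prefix as large
  as needed; finite shiftlag then bounds the shift of the suffix.\<close>

lemma shift_bounded_after_large_lag:
  assumes disj: "X \<inter> Y = {}" and reg: "regular (X \<union> Y) T" and fsl: "finite_shiftlag X Y T"
  obtains C N where "\<And>x z. x @ z \<in> T \<Longrightarrow> int C \<le> \<bar>lag X Y x\<bar> \<Longrightarrow> shift X z \<le> N"
proof -
  obtain N where N: "\<And>w. w \<in> T \<Longrightarrow> shiftlag X Y w \<le> N"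
    using fsl by (auto simp: finite_shiftlag_def)
  have "shift X z \<le> N"
    if xz: "x @ z \<in> T" and big: "int (card (quotients (X \<union> Y) T)) \<le> \<bar>lag X Y x\<bar>" for x z
  proof -
    have "x @ z \<in> lists (X \<union> Y)" using xz regular_subset_lists[OF reg] by blast
    then obtain x1 x2 x3 where x: "x = x1 @ x2 @ x3" and loop: "lquot (x1 @ x2) T = lquot x1 T"
      and d: "lag X Y x2 \<noteq> 0"
      using lag_changing_loop[OF disj finite_quotients_if_regular[OF reg] _ big] by auto
    define n where "n = nat (\<bar>lag X Y x1\<bar> + \<bar>lag X Y x3\<bar>) + shift X z + length z"
    define y where "y = x1 @ concat (replicate n x2) @ x3"
    have "x3 @ z \<in> lquot (x1 @ x2) T" using xz by (simp add: x lquot_def)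
    then have "x3 @ z \<in> lquot (x1 @ concat (replicate n x2)) T"
      by (simp only: loop lquot_append_power[OF loop])
    then have "y @ z \<in> T" by (simp add: lquot_def y_def)
    have "int n \<le> \<bar>int n * lag X Y x2\<bar>"
      using d by (simp add: abs_mult mult_le_cancel_left1 del: of_nat_eq_0_iff) linarith
    moreover have "lag X Y y = lag X Y x1 + int n * lag X Y x2 + lag X Y x3"
      by (simp add: y_def lag_concat_replicate)
    moreover have "int n = \<bar>lag X Y x1\<bar> + \<bar>lag X Y x3\<bar> + int (shift X z + length z)"
      by (simp add: n_def)
    ultimately have "int (shift X z + length z) \<le> \<bar>lag X Y y\<bar>"
      by linarith
    then show ?thesis
      using shift_le_shiftlag_if_lag_ge N[OF \<open>y @ z \<in> T\<close>] by fastforce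
  qed
  then show thesis by (rule that)
qed

section \<open>Synchronising with a regular language\<close>

definition comparable :: "'a list \<Rightarrow> 'a list \<Rightarrow> bool" where
  "comparable a b \<longleftrightarrow> (\<exists>t. b = a @ t) \<or> (\<exists>t. a = b @ t)"

lemma comparable_if_append_eq: "a @ p = b @ q \<Longrightarrow> comparable a b"
  by (auto simp: comparable_def append_eq_append_conv2)

text \<open>Of two comparable words one residual is empty and the other is the buffer by which the
  longer word is ahead.\<close>

lemma append_eq_append_iff_buffers:
  assumes "comparable a b"
  shows "a @ p = b @ q \<longleftrightarrow> drop (length b) a @ p = drop (length a) b @ q"
  using assms by (auto simp: comparable_def)

lemma length_filter_take_le: "length (filter P (take k x)) \<le> length (filter P x)"
  by (metis append_take_drop_id filter_append le_add1 length_append)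

lemma length_prj_le_if_abs_lag_le:
  assumes disj: "X \<inter> Y = {}" and "x \<in> lists (X \<union> Y)" "x' \<in> lists (X \<union> Y)"
    and "length x' = length x" "\<bar>lag X Y x\<bar> \<le> int C" "\<bar>lag X Y x'\<bar> \<le> int C"
  shows "length (prj X x') \<le> length (prj X x) + C" "length (prj Y x') \<le> length (prj Y x) + C"
  using assms length_eq_length_prj_add[OF assms(2) disj] length_eq_length_prj_add[OF assms(3) disj]
  unfolding lag_def by linarith+

definition residual :: "'a list \<Rightarrow> 'a list \<Rightarrow> 'a list set \<Rightarrow> 'a list set" where
  "residual p q U = {\<sigma>. \<exists>\<alpha>\<in>U. p @ \<alpha> = q @ \<sigma>}"

definition residual_space :: "'a set \<Rightarrow> nat \<Rightarrow> 'a list set set \<Rightarrow> 'a list set set" where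
  "residual_space X C UU = {(@) t ` U | t U. U \<in> UU \<and> t \<in> lists X \<and> length t \<le> C} \<union>
     (\<Union>U\<in>UU. quotients X U) \<union> {{}}"

lemma residual_in_residual_space:
  assumes "length p \<le> length q + C" "p \<in> lists X" "q \<in> lists X" "U \<in> UU"
  shows "residual p q U \<in> residual_space X C UU"
proof (cases "comparable p q")
  case False
  then have "residual p q U = {}" by (auto simp: residual_def dest: comparable_if_append_eq)
  then show ?thesis by (simp add: residual_space_def)
next
  case True
  then show ?thesis unfolding comparable_def
  proof
    assume "\<exists>t. q = p @ t"
    then obtain t where "q = p @ t" by blast
    then have "residual p q U = lquot t U" "t \<in> lists X"
      using assms(3) by (auto simp: residual_def lquot_def)
    then show ?thesis using assms(4) by (auto simp: residual_space_def quotients_def)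
  next
    assume "\<exists>t. p = q @ t"
    then obtain t where "p = q @ t" by blast
    then have "residual p q U = (@) t ` U" "t \<in> lists X" "length t \<le> C"
      using assms(1,2) by (auto simp: residual_def)
    then show ?thesis using assms(4) unfolding residual_space_def by blast
  qed
qed

lemma finite_residual_space:
  assumes "finite X" "finite UU" "\<And>U. U \<in> UU \<Longrightarrow> regular X U"
  shows "finite (residual_space X C UU)"
proof -
  have "{(@) t ` U | t U. U \<in> UU \<and> t \<in> lists X \<and> length t \<le> C}
      = (\<lambda>(t, U). (@) t ` U) ` ({t. set t \<subseteq> X \<and> length t \<le> C} \<times> UU)"
    by auto
  moreover have "finite ({t. set t \<subseteq> X \<and> length t \<le> C} \<times> UU)"
    using assms(1,2) finite_lists_length_le[OF assms(1)] by simp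
  moreover have "finite (\<Union>U\<in>UU. quotients X U)"
    using assms(2,3) finite_quotients_if_regular by blast
  ultimately show ?thesis unfolding residual_space_def by simp
qed

type_synonym 'a sync_state = "'a list set \<times> 'a list \<times> 'a list \<times> 'a list \<times> 'a list \<times> int \<times> int"

context
  fixes Sig Gam :: "'a set" and R :: "'a list set" and C B :: nat
begin

definition lag_bounded :: "'a list \<Rightarrow> bool" where
  "lag_bounded y \<longleftrightarrow> (\<forall>i. \<bar>lag Sig Gam (take i y)\<bar> \<le> int C)"

lemma lag_bounded_take: "lag_bounded y \<Longrightarrow> lag_bounded (take k y)"
  unfolding lag_bounded_def by (metis take_take)

lemma abs_lag_le_if_lag_bounded: "lag_bounded y \<Longrightarrow> \<bar>lag Sig Gam y\<bar> \<le> int C"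
  unfolding lag_bounded_def by (metis take_all order_refl)

lemma lag_bounded_append_take:
  assumes "lag_bounded x" "\<forall>i\<le>k. \<bar>lag Sig Gam x + lag Sig Gam (take i z)\<bar> \<le> int C"
  shows "lag_bounded (x @ take k z)"
  unfolding lag_bounded_def
proof
  fix i
  show "\<bar>lag Sig Gam (take i (x @ take k z))\<bar> \<le> int C"
  proof (cases "i \<le> length x")
    case True
    then show ?thesis using assms(1) by (simp add: lag_bounded_def)
  next
    case False
    then have "take i (x @ take k z) = x @ take (min (i - length x) k) z" by (simp add: min_def)
    then show ?thesis using assms(2) by simp
  qed
qed

lemma abs_lag_le_if_lag_bounded_append_take:
  assumes "lag_bounded (x @ take k z)" "i \<le> k"
  shows "\<bar>lag Sig Gam x + lag Sig Gam (take i z)\<bar> \<le> int C"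
proof -
  have "take (length x + i) (x @ take k z) = x @ take i z" using assms(2) by (simp add: min_def)
  then show ?thesis using assms(1) unfolding lag_bounded_def by (metis lag_append)
qed

lemma lag_bounded_take_if_abs_lag_less:
  assumes disj: "Sig \<inter> Gam = {}" and less: "\<forall>m<j. \<bar>lag Sig Gam (take m u)\<bar> < int C"
  shows "lag_bounded (take j u)"
  unfolding lag_bounded_def
proof
  fix k
  show "\<bar>lag Sig Gam (take k (take j u))\<bar> \<le> int C"
  proof (cases "k < j")
    case True then show ?thesis using less by fastforce
  next
    case False
    then show ?thesis
      using less abs_lag_take_Suc_le[OF disj, of "j - 1" u] by (cases j) (auto simp: min_def)
  qed
qed

definition sync_lang :: "'a list set" where
  "sync_lang = {w \<in> lists (Sig \<union> Gam). \<exists>w'\<in>R. \<exists>j\<le>length w. sem Sig Gam w' = sem Sig Gam w \<and>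
      lag_bounded (take j w) \<and> lag_bounded (take j w') \<and>
      (j = length w \<or> (\<forall>v\<in>lquot (take j w') R. shift Sig v \<le> B))}"

text \<open>While the synchronous phase still runs after reading \<open>x\<close> (against the prefix \<open>x'\<close> of the
  witness), all that matters is the quotient of \<open>R\<close> by \<open>x'\<close>, the two pairs of buffers by which
  the projections of \<open>x\<close> and \<open>x'\<close> differ, and the two lags.\<close>

definition sync_state :: "'a list \<Rightarrow> 'a list \<Rightarrow> 'a sync_state" where
  "sync_state x x' = (lquot x' R,
     drop (length (prj Sig x)) (prj Sig x'), drop (length (prj Sig x')) (prj Sig x),
     drop (length (prj Gam x)) (prj Gam x'), drop (length (prj Gam x')) (prj Gam x),
     lag Sig Gam x, lag Sig Gam x')"

definition sync_states :: "'a list \<Rightarrow> 'a sync_state set" where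
  "sync_states x = {sync_state x x' | x'. x' \<in> lists (Sig \<union> Gam) \<and> length x' = length x \<and>
     lag_bounded x \<and> lag_bounded x' \<and>
     comparable (prj Sig x) (prj Sig x') \<and> comparable (prj Gam x) (prj Gam x')}"

definition cont_lang :: "'a sync_state \<Rightarrow> 'a list set" where
  "cont_lang = (\<lambda>(Q, bS', bS, bG', bG, l, l').
     {z \<in> lists (Sig \<union> Gam). \<exists>z'\<in>Q. \<exists>j\<le>length z.
        bS @ prj Sig z = bS' @ prj Sig z' \<and> bG @ prj Gam z = bG' @ prj Gam z' \<and>
        (\<forall>i\<le>j. \<bar>l + lag Sig Gam (take i z)\<bar> \<le> int C \<and> \<bar>l' + lag Sig Gam (take i z')\<bar> \<le> int C) \<and>
        (j = length z \<or> (\<forall>v\<in>lquot (take j z') Q. shift Sig v \<le> B))})"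

definition rdec :: "'a list set \<Rightarrow> ('a list set \<times> 'a list set) set" where
  "rdec Q = (SOME I. rdecomp Sig Gam Q I)"

text \<open>Once the synchronous phase has ended at the prefix \<open>u'\<close> of the witness, the rest of the
  witness ranges over a recognizable relation; what remains of one of its products after
  reading \<open>x\<close> is a pair of residuals.\<close>

definition rect_states :: "'a list \<Rightarrow> ('a list set \<times> 'a list set) set" where
  "rect_states x = {(residual (prj Sig u') (prj Sig x) U, residual (prj Gam u') (prj Gam x) V) | u' U V.
     u' \<in> lists (Sig \<union> Gam) \<and> length u' \<le> length x \<and> lag_bounded (take (length u') x) \<and>
     lag_bounded u' \<and> (\<forall>v\<in>lquot u' R. shift Sig v \<le> B) \<and> (U, V) \<in> rdec (lquot u' R)}"

definition rect_pieces :: "('a list set \<times> 'a list set) set" where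
  "rect_pieces = (\<Union>Q\<in>{Q \<in> quotients (Sig \<union> Gam) R. \<forall>v\<in>Q. shift Sig v \<le> B}. rdec Q)"

definition rect_lang :: "'a list set \<times> 'a list set \<Rightarrow> 'a list set" where
  "rect_lang = (\<lambda>(E, F). {z \<in> lists (Sig \<union> Gam). prj Sig z \<in> E \<and> prj Gam z \<in> F})"

lemma rdecomp_rdec:
  assumes "Sig \<inter> Gam = {}" "regular (Sig \<union> Gam) R" "\<forall>v\<in>lquot u' R. shift Sig v \<le> B"
  shows "rdecomp Sig Gam (lquot u' R) (rdec (lquot u' R))"
  unfolding rdec_def
  using ex_rdecomp_if_shift_le[OF assms(1) regular_lquot[OF assms(2)] assms(3)] by (rule someI_ex)

end

context
  fixes Sig Gam :: "'a set" and R :: "'a list set" and C B :: nat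
  assumes disj: "Sig \<inter> Gam = {}" and regR: "regular (Sig \<union> Gam) R"
begin

lemma ex_cont_lang_if_sync_beyond:
  assumes xz: "x @ z \<in> lists (Sig \<union> Gam)" and w': "w' \<in> R"
    and se: "sem Sig Gam w' = sem Sig Gam (x @ z)"
    and j: "length x \<le> j" "j \<le> length (x @ z)"
    and bl: "lag_bounded Sig Gam C (take j (x @ z))" "lag_bounded Sig Gam C (take j w')"
    and bd: "j = length (x @ z) \<or> (\<forall>v\<in>lquot (take j w') R. shift Sig v \<le> B)"
  shows "\<exists>\<delta>\<in>sync_states Sig Gam R C x. z \<in> cont_lang Sig Gam C B \<delta>"
proof -
  have w'A: "w' \<in> lists (Sig \<union> Gam)" using w' regular_subset_lists[OF regR] by blast
  define x' where "x' = take (length x) w'"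
  define z' where "z' = drop (length x) w'"
  define j' where "j' = j - length x"
  have w'_eq: "w' = x' @ z'" by (simp add: x'_def z'_def)
  have "length w' = length (x @ z)" using length_eq_if_sem_eq[OF w'A xz disj se] .
  then have lx': "length x' = length x" by (simp add: x'_def)
  have x'A: "x' \<in> lists (Sig \<union> Gam)" using w'A by (auto simp: x'_def dest: in_set_takeD)
  have take_xz: "take j (x @ z) = x @ take j' z" using j(1) by (simp add: j'_def)
  have take_w': "take j w' = x' @ take j' z'" using j(1) lx' w'_eq by (simp add: j'_def)
  have blx: "lag_bounded Sig Gam C x" "lag_bounded Sig Gam C x'"
    using lag_bounded_take[OF bl(1), of "length x"] lag_bounded_take[OF bl(2), of "length x"]
    unfolding take_xz take_w' using lx' by simp_all
  have eS: "prj Sig x @ prj Sig z = prj Sig x' @ prj Sig z'"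
    and eG: "prj Gam x @ prj Gam z = prj Gam x' @ prj Gam z'"
    using se w'_eq by (simp_all add: sem_def)
  have cS: "comparable (prj Sig x) (prj Sig x')" using comparable_if_append_eq[OF eS] .
  have cG: "comparable (prj Gam x) (prj Gam x')" using comparable_if_append_eq[OF eG] .
  have "sync_state Sig Gam R x x' \<in> sync_states Sig Gam R C x"
    unfolding sync_states_def using x'A lx' blx cS cG by blast
  moreover have "z \<in> cont_lang Sig Gam C B (sync_state Sig Gam R x x')"
  proof -
    have "z' \<in> lquot x' R" using w' w'_eq by (simp add: lquot_def)
    moreover have "j' \<le> length z" using j by (simp add: j'_def)
    moreover have "\<forall>i\<le>j'. \<bar>lag Sig Gam x + lag Sig Gam (take i z)\<bar> \<le> int C \<and>
        \<bar>lag Sig Gam x' + lag Sig Gam (take i z')\<bar> \<le> int C"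
      using abs_lag_le_if_lag_bounded_append_take bl unfolding take_xz take_w' by blast
    moreover have "j' = length z \<or> (\<forall>v\<in>lquot (take j' z') (lquot x' R). shift Sig v \<le> B)"
      using bd j(1) by (auto simp: j'_def take_w' lquot_append)
    ultimately show ?thesis
      using xz eS eG append_eq_append_iff_buffers[OF cS] append_eq_append_iff_buffers[OF cG]
      unfolding cont_lang_def sync_state_def by auto
  qed
  ultimately show ?thesis by blast
qed

lemma ex_rect_lang_if_sync_within:
  assumes xz: "x @ z \<in> lists (Sig \<union> Gam)" and w': "w' \<in> R"
    and se: "sem Sig Gam w' = sem Sig Gam (x @ z)" and j: "j < length x"
    and bl: "lag_bounded Sig Gam C (take j (x @ z))" "lag_bounded Sig Gam C (take j w')"
    and bd: "\<forall>v\<in>lquot (take j w') R. shift Sig v \<le> B"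
  shows "\<exists>EF\<in>rect_states Sig Gam R C B x. z \<in> rect_lang Sig Gam EF"
proof -
  have w'A: "w' \<in> lists (Sig \<union> Gam)" using w' regular_subset_lists[OF regR] by blast
  define u' where "u' = take j w'"
  define v' where "v' = drop j w'"
  have w'_eq: "w' = u' @ v'" by (simp add: u'_def v'_def)
  have "length w' = length (x @ z)" using length_eq_if_sem_eq[OF w'A xz disj se] .
  then have lu': "length u' = j" using j by (simp add: u'_def)
  have u'A: "u' \<in> lists (Sig \<union> Gam)" using w'A by (auto simp: u'_def dest: in_set_takeD)
  have "(prj Sig v', prj Gam v') \<in> semL Sig Gam (lquot u' R)"
    using w' w'_eq by (auto simp: semL_def sem_def lquot_def)
  then obtain U V where UV: "(U, V) \<in> rdec Sig Gam (lquot u' R)" "prj Sig v' \<in> U" "prj Gam v' \<in> V"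
    using rdecomp_rdec[OF disj regR bd[folded u'_def]] unfolding rdecomp_def by blast
  let ?EF = "(residual (prj Sig u') (prj Sig x) U, residual (prj Gam u') (prj Gam x) V)"
  have "take j (x @ z) = take (length u') x" using j lu' by simp
  then have "lag_bounded Sig Gam C (take (length u') x)" "lag_bounded Sig Gam C u'"
    "\<forall>v\<in>lquot u' R. shift Sig v \<le> B"
    using bl bd by (simp_all add: u'_def)
  then have "?EF \<in> rect_states Sig Gam R C B x"
    unfolding rect_states_def using u'A lu' j UV(1) by fastforce
  moreover have "z \<in> rect_lang Sig Gam ?EF"
    using xz se w'_eq UV(2,3) by (auto simp: rect_lang_def residual_def sem_def)
  ultimately show ?thesis by blast
qed

lemma append_mem_sync_lang_if_cont_lang:
  assumes x: "x \<in> lists (Sig \<union> Gam)" and \<delta>: "\<delta> \<in> sync_states Sig Gam R C x"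
    and z: "z \<in> cont_lang Sig Gam C B \<delta>"
  shows "x @ z \<in> sync_lang Sig Gam R C B"
proof -
  from \<delta> obtain x' where \<delta>_eq: "\<delta> = sync_state Sig Gam R x x'" and lx': "length x' = length x"
    and blx: "lag_bounded Sig Gam C x" "lag_bounded Sig Gam C x'"
    and cS: "comparable (prj Sig x) (prj Sig x')" and cG: "comparable (prj Gam x) (prj Gam x')"
    unfolding sync_states_def by blast
  from z obtain z' j where zA: "z \<in> lists (Sig \<union> Gam)" and z': "z' \<in> lquot x' R"
    and j: "j \<le> length z"
    and eS: "prj Sig x @ prj Sig z = prj Sig x' @ prj Sig z'"
    and eG: "prj Gam x @ prj Gam z = prj Gam x' @ prj Gam z'"
    and lags: "\<forall>i\<le>j. \<bar>lag Sig Gam x + lag Sig Gam (take i z)\<bar> \<le> int C \<and>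
                       \<bar>lag Sig Gam x' + lag Sig Gam (take i z')\<bar> \<le> int C"
    and bd: "j = length z \<or> (\<forall>v\<in>lquot (take j z') (lquot x' R). shift Sig v \<le> B)"
    unfolding \<delta>_eq cont_lang_def sync_state_def
    using append_eq_append_iff_buffers[OF cS] append_eq_append_iff_buffers[OF cG] by auto
  have take_xz: "take (length x + j) (x @ z) = x @ take j z" by simp
  have take_w': "take (length x + j) (x' @ z') = x' @ take j z'" using lx' by simp
  show ?thesis
    unfolding sync_lang_def
  proof (intro CollectI conjI bexI[of _ "x' @ z'"] exI[of _ "length x + j"])
    show "x' @ z' \<in> R" using z' by (simp add: lquot_def)
    show "sem Sig Gam (x' @ z') = sem Sig Gam (x @ z)" using eS eG by (simp add: sem_def)
    show "lag_bounded Sig Gam C (take (length x + j) (x @ z))"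
      "lag_bounded Sig Gam C (take (length x + j) (x' @ z'))"
      unfolding take_xz take_w' using lag_bounded_append_take blx lags by blast+
    show "length x + j = length (x @ z) \<or>
        (\<forall>v\<in>lquot (take (length x + j) (x' @ z')) R. shift Sig v \<le> B)"
      using bd unfolding take_w' lquot_append by auto
  qed (use x zA j in auto)
qed

lemma append_mem_sync_lang_if_rect_lang:
  assumes x: "x \<in> lists (Sig \<union> Gam)" and EF: "EF \<in> rect_states Sig Gam R C B x"
    and z: "z \<in> rect_lang Sig Gam EF"
  shows "x @ z \<in> sync_lang Sig Gam R C B"
proof -
  from EF obtain u' U V
    where EF_eq: "EF = (residual (prj Sig u') (prj Sig x) U, residual (prj Gam u') (prj Gam x) V)"
    and lu': "length u' \<le> length x" and bl: "lag_bounded Sig Gam C (take (length u') x)"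
      "lag_bounded Sig Gam C u'"
    and bd: "\<forall>v\<in>lquot u' R. shift Sig v \<le> B" and UV: "(U, V) \<in> rdec Sig Gam (lquot u' R)"
    unfolding rect_states_def by blast
  from z obtain \<alpha> \<beta> where zA: "z \<in> lists (Sig \<union> Gam)"
    and \<alpha>: "\<alpha> \<in> U" "prj Sig u' @ \<alpha> = prj Sig x @ prj Sig z"
    and \<beta>: "\<beta> \<in> V" "prj Gam u' @ \<beta> = prj Gam x @ prj Gam z"
    unfolding EF_eq rect_lang_def residual_def by auto
  have "(\<alpha>, \<beta>) \<in> semL Sig Gam (lquot u' R)"
    using rdecomp_rdec[OF disj regR bd] UV \<alpha>(1) \<beta>(1) unfolding rdecomp_def by blast
  then obtain v' where v': "u' @ v' \<in> R" "prj Sig v' = \<alpha>" "prj Gam v' = \<beta>"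
    unfolding semL_def sem_def lquot_def by auto
  show ?thesis
    unfolding sync_lang_def
  proof (intro CollectI conjI bexI[of _ "u' @ v'"] exI[of _ "length u'"])
    show "sem Sig Gam (u' @ v') = sem Sig Gam (x @ z)" using \<alpha>(2) \<beta>(2) v' by (simp add: sem_def)
  qed (use x zA lu' bl bd v'(1) in auto)
qed

lemma lquot_sync_lang:
  assumes x: "x \<in> lists (Sig \<union> Gam)"
  shows "lquot x (sync_lang Sig Gam R C B) =
    \<Union>(cont_lang Sig Gam C B ` sync_states Sig Gam R C x) \<union>
    \<Union>(rect_lang Sig Gam ` rect_states Sig Gam R C B x)"
proof (intro set_eqI iffI)
  fix z assume "z \<in> lquot x (sync_lang Sig Gam R C B)"
  then obtain w' j where xz: "x @ z \<in> lists (Sig \<union> Gam)" and w': "w' \<in> R"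
    and j: "j \<le> length (x @ z)" and se: "sem Sig Gam w' = sem Sig Gam (x @ z)"
    and bl: "lag_bounded Sig Gam C (take j (x @ z))" "lag_bounded Sig Gam C (take j w')"
    and bd: "j = length (x @ z) \<or> (\<forall>v\<in>lquot (take j w') R. shift Sig v \<le> B)"
    unfolding lquot_def sync_lang_def by blast
  show "z \<in> \<Union>(cont_lang Sig Gam C B ` sync_states Sig Gam R C x) \<union>
      \<Union>(rect_lang Sig Gam ` rect_states Sig Gam R C B x)"
  proof (cases "length x \<le> j")
    case True
    then show ?thesis using ex_cont_lang_if_sync_beyond[OF xz w' se True j bl bd] by blast
  next
    case False
    then have "\<forall>v\<in>lquot (take j w') R. shift Sig v \<le> B" using bd by auto
    then show ?thesis using ex_rect_lang_if_sync_within[OF xz w' se _ bl] False by force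
  qed
next
  fix z assume "z \<in> \<Union>(cont_lang Sig Gam C B ` sync_states Sig Gam R C x) \<union>
      \<Union>(rect_lang Sig Gam ` rect_states Sig Gam R C B x)"
  then show "z \<in> lquot x (sync_lang Sig Gam R C B)"
    using append_mem_sync_lang_if_cont_lang[OF x] append_mem_sync_lang_if_rect_lang[OF x]
    by (auto simp: lquot_def)
qed

end

context
  fixes Sig Gam :: "'a set" and R :: "'a list set" and C B :: nat
  assumes disj: "Sig \<inter> Gam = {}" and regR: "regular (Sig \<union> Gam) R"
begin

lemma finite_rect_pieces: "finite (rect_pieces Sig Gam R B)"
  and regular_rect_pieces: "(U, V) \<in> rect_pieces Sig Gam R B \<Longrightarrow> regular Sig U \<and> regular Gam V"
proof -
  let ?QB = "{Q \<in> quotients (Sig \<union> Gam) R. \<forall>v\<in>Q. shift Sig v \<le> B}"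
  have dec: "rdecomp Sig Gam Q (rdec Sig Gam Q)" if "Q \<in> ?QB" for Q
    using that rdecomp_rdec[OF disj regR] by (auto simp: quotients_def)
  have "finite ?QB" using finite_quotients_if_regular[OF regR] by simp
  then show "finite (rect_pieces Sig Gam R B)"
    using dec by (auto simp: rect_pieces_def rdecomp_def)
  show "(U, V) \<in> rect_pieces Sig Gam R B \<Longrightarrow> regular Sig U \<and> regular Gam V"
    using dec by (fastforce simp: rect_pieces_def rdecomp_def)
qed

lemma rect_states_subset:
  assumes x: "x \<in> lists (Sig \<union> Gam)"
  shows "rect_states Sig Gam R C B x \<subseteq>
    residual_space Sig C (fst ` rect_pieces Sig Gam R B) \<times> residual_space Gam C (snd ` rect_pieces Sig Gam R B)"
proof
  fix EF assume "EF \<in> rect_states Sig Gam R C B x"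
  then obtain u' U V
    where EF: "EF = (residual (prj Sig u') (prj Sig x) U, residual (prj Gam u') (prj Gam x) V)"
    and u'A: "u' \<in> lists (Sig \<union> Gam)" and lu': "length u' \<le> length x"
    and bl: "lag_bounded Sig Gam C (take (length u') x)" "lag_bounded Sig Gam C u'"
    and bd: "\<forall>v\<in>lquot u' R. shift Sig v \<le> B" and UV: "(U, V) \<in> rdec Sig Gam (lquot u' R)"
    unfolding rect_states_def by blast
  have "(U, V) \<in> rect_pieces Sig Gam R B"
    using u'A bd UV by (auto simp: rect_pieces_def quotients_def)
  then have pieces: "U \<in> fst ` rect_pieces Sig Gam R B" "V \<in> snd ` rect_pieces Sig Gam R B"
    by force+
  have "take (length u') x \<in> lists (Sig \<union> Gam)" using x by (auto dest: in_set_takeD)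
  then have "length (prj Sig u') \<le> length (prj Sig (take (length u') x)) + C"
    "length (prj Gam u') \<le> length (prj Gam (take (length u') x)) + C"
    using length_prj_le_if_abs_lag_le[OF disj _ u'A _ abs_lag_le_if_lag_bounded abs_lag_le_if_lag_bounded]
      bl lu' by auto
  then have "length (prj Sig u') \<le> length (prj Sig x) + C" "length (prj Gam u') \<le> length (prj Gam x) + C"
    using length_filter_take_le[of _ "length u'" x] by (meson add_le_mono1 order_trans)+
  then show "EF \<in> residual_space Sig C (fst ` rect_pieces Sig Gam R B) \<times>
      residual_space Gam C (snd ` rect_pieces Sig Gam R B)"
    unfolding EF by (auto intro!: residual_in_residual_space pieces)
qed

lemma sync_states_subset:
  assumes x: "x \<in> lists (Sig \<union> Gam)"
  shows "sync_states Sig Gam R C x \<subseteq> quotients (Sig \<union> Gam) R \<times>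
    {t. set t \<subseteq> Sig \<and> length t \<le> C} \<times> {t. set t \<subseteq> Sig \<and> length t \<le> C} \<times>
    {t. set t \<subseteq> Gam \<and> length t \<le> C} \<times> {t. set t \<subseteq> Gam \<and> length t \<le> C} \<times>
    {- int C..int C} \<times> {- int C..int C}"
proof
  fix \<delta> assume "\<delta> \<in> sync_states Sig Gam R C x"
  then obtain x' where \<delta>: "\<delta> = sync_state Sig Gam R x x'" and x'A: "x' \<in> lists (Sig \<union> Gam)"
    and lx': "length x' = length x" and bl: "lag_bounded Sig Gam C x" "lag_bounded Sig Gam C x'"
    unfolding sync_states_def by blast
  have lags: "\<bar>lag Sig Gam x\<bar> \<le> int C" "\<bar>lag Sig Gam x'\<bar> \<le> int C"
    using bl abs_lag_le_if_lag_bounded by blast+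
  have "length (prj Sig x') \<le> length (prj Sig x) + C" "length (prj Gam x') \<le> length (prj Gam x) + C"
    "length (prj Sig x) \<le> length (prj Sig x') + C" "length (prj Gam x) \<le> length (prj Gam x') + C"
    using length_prj_le_if_abs_lag_le[OF disj x x'A lx' lags]
      length_prj_le_if_abs_lag_le[OF disj x'A x lx'[symmetric] lags(2,1)] by auto
  then show "\<delta> \<in> quotients (Sig \<union> Gam) R \<times>
    {t. set t \<subseteq> Sig \<and> length t \<le> C} \<times> {t. set t \<subseteq> Sig \<and> length t \<le> C} \<times>
    {t. set t \<subseteq> Gam \<and> length t \<le> C} \<times> {t. set t \<subseteq> Gam \<and> length t \<le> C} \<times>
    {- int C..int C} \<times> {- int C..int C}"
    using lags lquot_in_quotients[OF x'A, of R]
    by (auto simp: \<delta> sync_state_def dest: in_set_dropD)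
qed

text \<open>A finite automaton for \<open>sync_lang\<close> only needs to track the sets of reachable synchronous
  states and residual pairs, and both range over finite sets.\<close>

lemma regular_sync_lang:
  assumes "finite Sig" "finite Gam"
  shows "regular (Sig \<union> Gam) (sync_lang Sig Gam R C B)"
proof (rule regular_if_quotients_among)
  let ?D1 = "quotients (Sig \<union> Gam) R \<times>
    {t. set t \<subseteq> Sig \<and> length t \<le> C} \<times> {t. set t \<subseteq> Sig \<and> length t \<le> C} \<times>
    {t. set t \<subseteq> Gam \<and> length t \<le> C} \<times> {t. set t \<subseteq> Gam \<and> length t \<le> C} \<times>
    {- int C..int C} \<times> {- int C..int C}"
  let ?D2 = "residual_space Sig C (fst ` rect_pieces Sig Gam R B) \<times>
    residual_space Gam C (snd ` rect_pieces Sig Gam R B)"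
  show "sync_lang Sig Gam R C B \<subseteq> lists (Sig \<union> Gam)" by (auto simp: sync_lang_def)
  have "finite ?D1"
    using assms finite_quotients_if_regular[OF regR] by (simp add: finite_lists_length_le)
  moreover have "finite ?D2"
    using assms finite_rect_pieces regular_rect_pieces
    by (auto intro!: finite_residual_space finite_cartesian_product)
  ultimately show "finite (Pow ?D1 \<times> Pow ?D2)" by simp
  fix x assume "x \<in> lists (Sig \<union> Gam)"
  then show "\<exists>d\<in>Pow ?D1 \<times> Pow ?D2. lquot x (sync_lang Sig Gam R C B) =
      (\<lambda>(S1, S2). \<Union>(cont_lang Sig Gam C B ` S1) \<union> \<Union>(rect_lang Sig Gam ` S2)) d"
    using lquot_sync_lang[OF disj regR] sync_states_subset rect_states_subset
    by (intro bexI[of _ "(sync_states Sig Gam R C x, rect_states Sig Gam R C B x)"]) auto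
qed

end

section \<open>Maximal synchronisations\<close>

lemma RegFS_lquot_take_mono:
  assumes regT: "regular (Sig \<union> Gam) T" and fs: "RegFS Sig Gam (lquot (take i w) T)" and "i \<le> j"
  shows "RegFS Sig Gam (lquot (take j w) T)"
proof -
  obtain N where N: "\<forall>v\<in>lquot (take i w) T. shift Sig v \<le> N"
    using fs by (auto simp: RegFS_def finite_shift_def)
  define y where "y = drop i (take j w)"
  have "take j w = take i w @ y"
    unfolding y_def using \<open>i \<le> j\<close> by (metis append_take_drop_id min.absorb1 take_take)
  then have "\<forall>z\<in>lquot (take j w) T. shift Sig z \<le> N"
    using N shift_le_shift_append[of Sig _ y] order_trans by (fastforce simp: lquot_def)
  then show ?thesis
    unfolding RegFS_def finite_shift_def using regular_lquot[OF regT] by blast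
qed

text \<open>Up-closed subsets of \<open>{0..L}\<close> are final segments, hence ordered by inclusion.\<close>

lemma subset_if_card_le_upclosed:
  fixes P1 P2 :: "nat set"
  assumes "P1 \<subseteq> {0..L}" "P2 \<subseteq> {0..L}"
    and up1: "\<And>i j. i \<in> P1 \<Longrightarrow> i \<le> j \<Longrightarrow> j \<le> L \<Longrightarrow> j \<in> P1"
    and up2: "\<And>i j. i \<in> P2 \<Longrightarrow> i \<le> j \<Longrightarrow> j \<le> L \<Longrightarrow> j \<in> P2"
    and "card P1 \<le> card P2"
  shows "P1 \<subseteq> P2"
proof
  fix a assume a1: "a \<in> P1"
  show "a \<in> P2"
  proof (rule ccontr)
    assume a2: "a \<notin> P2"
    have aL: "a \<le> L" using a1 assms(1) by auto
    have "P2 \<subseteq> {Suc a..L}" using up2[OF _ _ aL] a2 assms(2) by (force simp: not_less_eq_eq)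
    then have "card P2 \<le> L - a" using card_mono[of "{Suc a..L}" P2] by simp
    moreover have "{a..L} \<subseteq> P1" using up1[OF a1] by auto
    then have "L - a + 1 \<le> card P1"
      using card_mono[of P1 "{a..L}"] assms(1) aL finite_subset[OF assms(1)] by simp
    ultimately show False using assms(5) by linarith
  qed
qed

definition fs_positions :: "'a set \<Rightarrow> 'a set \<Rightarrow> 'a list set \<Rightarrow> 'a list \<Rightarrow> nat set" where
  "fs_positions Sig Gam T u = {i. i \<le> length u \<and> RegFS Sig Gam (lquot (take i u) T)}"

lemma ex_maximal_witness:
  assumes disj: "Sig \<inter> Gam = {}" and regT: "regular (Sig \<union> Gam) T" and p: "p \<in> semL Sig Gam T"
  obtains w where "w \<in> T" "sem Sig Gam w = p"
    "\<forall>w'\<in>T. sem Sig Gam w' = sem Sig Gam w \<longrightarrow> preceq Sig Gam T w' w"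
proof -
  obtain w0 where "w0 \<in> T \<and> sem Sig Gam w0 = p" using p unfolding semL_def by blast
  then obtain w where w: "w \<in> T" "sem Sig Gam w = p"
    and least: "\<And>y. y \<in> T \<and> sem Sig Gam y = p \<Longrightarrow>
      card (fs_positions Sig Gam T w) \<le> card (fs_positions Sig Gam T y)"
    using ex_has_least_nat[of "\<lambda>y. y \<in> T \<and> sem Sig Gam y = p" w0 "\<lambda>y. card (fs_positions Sig Gam T y)"]
    by blast
  have up: "\<And>u i j. i \<in> fs_positions Sig Gam T u \<Longrightarrow> i \<le> j \<Longrightarrow> j \<le> length u \<Longrightarrow>
      j \<in> fs_positions Sig Gam T u"
    unfolding fs_positions_def using RegFS_lquot_take_mono[OF regT] by blast
  have "preceq Sig Gam T w' w" if w': "w' \<in> T" "sem Sig Gam w' = sem Sig Gam w" for w'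
  proof -
    have "w \<in> lists (Sig \<union> Gam)" "w' \<in> lists (Sig \<union> Gam)"
      using w(1) w'(1) regular_subset_lists[OF regT] by blast+
    then have L: "length w = length w'"
      using length_eq_if_sem_eq[OF _ _ disj] w'(2) by metis
    have "card (fs_positions Sig Gam T w) \<le> card (fs_positions Sig Gam T w')"
      using least w w' by simp
    then have "fs_positions Sig Gam T w \<subseteq> fs_positions Sig Gam T w'"
    proof (rule subset_if_card_le_upclosed[where L = "length w", rotated 4])
      show "fs_positions Sig Gam T w \<subseteq> {0..length w}" "fs_positions Sig Gam T w' \<subseteq> {0..length w}"
        using L by (auto simp: fs_positions_def)
    qed (use up L in metis)+
    then show ?thesis using w w' L unfolding preceq_def fs_positions_def by auto
  qed
  then show thesis using that w by blast
qed

lemma semL_maxsync: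
  assumes "Sig \<inter> Gam = {}" "regular (Sig \<union> Gam) T" "semL Sig Gam S \<subseteq> semL Sig Gam T"
  shows "semL Sig Gam (maxsync Sig Gam S T) = semL Sig Gam S"
proof
  show "semL Sig Gam (maxsync Sig Gam S T) \<subseteq> semL Sig Gam S"
    unfolding maxsync_def semL_def by blast
  show "semL Sig Gam S \<subseteq> semL Sig Gam (maxsync Sig Gam S T)"
  proof
    fix p assume p: "p \<in> semL Sig Gam S"
    with assms(3) obtain w where "w \<in> T" "sem Sig Gam w = p"
      "\<forall>w'\<in>T. sem Sig Gam w' = sem Sig Gam w \<longrightarrow> preceq Sig Gam T w' w"
      using ex_maximal_witness[OF assms(1,2)] by blast
    then show "p \<in> semL Sig Gam (maxsync Sig Gam S T)"
      using p unfolding maxsync_def semL_def by blast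
  qed
qed

lemma in_Rel_if_regular_maxsync:
  assumes "Sig \<inter> Gam = {}" "regular (Sig \<union> Gam) T"
    and "regular (Sig \<union> Gam) (maxsync Sig Gam S T)" "semL Sig Gam S \<subseteq> semL Sig Gam T"
  shows "semL Sig Gam S \<in> Rel Sig Gam T"
  using assms semL_maxsync[OF assms(1,2,4)] unfolding Rel_def by (auto simp: maxsync_def)

lemma abs_lag_less_if_not_RegFS:
  assumes "Sig \<inter> Gam = {}" "regular (Sig \<union> Gam) T" "finite_shiftlag Sig Gam T"
  obtains C where "\<And>x. \<not> RegFS Sig Gam (lquot x T) \<Longrightarrow> \<bar>lag Sig Gam x\<bar> < int C"
proof -
  obtain C N where CN: "\<And>x z. x @ z \<in> T \<Longrightarrow> int C \<le> \<bar>lag Sig Gam x\<bar> \<Longrightarrow> shift Sig z \<le> N"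
    using shift_bounded_after_large_lag[OF assms] by blast
  have "RegFS Sig Gam (lquot x T)" if "int C \<le> \<bar>lag Sig Gam x\<bar>" for x
  proof -
    have "\<forall>z\<in>lquot x T. shift Sig z \<le> N" using CN that by (simp add: lquot_def)
    then show ?thesis
      unfolding RegFS_def finite_shift_def using regular_lquot[OF assms(2)] by blast
  qed
  then show thesis by (meson that not_le)
qed

lemma uniform_shift_bound_RegFS_lquot:
  assumes "regular (Sig \<union> Gam) T"
  obtains B where "\<And>x v. x \<in> lists (Sig \<union> Gam) \<Longrightarrow> RegFS Sig Gam (lquot x T) \<Longrightarrow>
    v \<in> lquot x T \<Longrightarrow> shift Sig v \<le> B"
proof -
  let ?FS = "{Q \<in> quotients (Sig \<union> Gam) T. finite_shift Sig Q}"
  have "\<forall>Q\<in>?FS. \<exists>n. \<forall>v\<in>Q. shift Sig v \<le> n" unfolding finite_shift_def by blast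
  then obtain f where f: "\<And>Q v. Q \<in> ?FS \<Longrightarrow> v \<in> Q \<Longrightarrow> shift Sig v \<le> f Q"
    by (metis bchoice)
  have fin: "finite ?FS" using finite_quotients_if_regular[OF assms] by simp
  show thesis
  proof (rule that)
    fix x v assume x: "x \<in> lists (Sig \<union> Gam)" "RegFS Sig Gam (lquot x T)" "v \<in> lquot x T"
    then have Q: "lquot x T \<in> ?FS" by (simp add: RegFS_def lquot_in_quotients)
    then have "f (lquot x T) \<le> Max (f ` ?FS)" using fin by simp
    then show "shift Sig v \<le> Max (f ` ?FS)" using f[OF Q x(3)] by linarith
  qed
qed

text \<open>Maximality of \<open>w\<close> transfers non-membership in \<open>Reg\<^sub>F\<^sub>S\<close> from the quotients by prefixes
  of \<open>w'\<close> to those by prefixes of \<open>w\<close>; so both words stay within lag \<open>C\<close> up to the first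
  position at which the quotient by the prefix of \<open>w'\<close> has finite shift.\<close>

lemma mem_sync_lang_if_maximal:
  assumes disj: "Sig \<inter> Gam = {}" and regT: "regular (Sig \<union> Gam) T" and T'T: "T' \<subseteq> T"
    and lag_bound: "\<And>x. \<not> RegFS Sig Gam (lquot x T) \<Longrightarrow> \<bar>lag Sig Gam x\<bar> < int C"
    and shift_bound: "\<And>x v. x \<in> lists (Sig \<union> Gam) \<Longrightarrow> RegFS Sig Gam (lquot x T) \<Longrightarrow>
      v \<in> lquot x T \<Longrightarrow> shift Sig v \<le> B"
    and w: "w \<in> T" and max: "\<forall>w'\<in>T. sem Sig Gam w' = sem Sig Gam w \<longrightarrow> preceq Sig Gam T w' w"
    and w': "w' \<in> T'" and se: "sem Sig Gam w' = sem Sig Gam w"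
  shows "w \<in> sync_lang Sig Gam T' C B"
proof -
  have wA: "w \<in> lists (Sig \<union> Gam)" and w'A: "w' \<in> lists (Sig \<union> Gam)"
    using w w' T'T regular_subset_lists[OF regT] by blast+
  have L: "length w' = length w" using length_eq_if_sem_eq[OF w'A wA disj se] .
  have "preceq Sig Gam T w' w" using max w' T'T se by blast
  then have pre: "\<And>i. i \<le> length w' \<Longrightarrow> RegFS Sig Gam (lquot (take i w) T) \<Longrightarrow>
      RegFS Sig Gam (lquot (take i w') T)"
    unfolding preceq_def using L by simp
  define j where "j = (LEAST i. i = length w' \<or> RegFS Sig Gam (lquot (take i w') T))"
  have j_le: "j \<le> length w'" unfolding j_def by (rule Least_le) simp
  have j_fs: "j = length w' \<or> RegFS Sig Gam (lquot (take j w') T)"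
    unfolding j_def by (rule LeastI[of _ "length w'"]) simp
  have before_j: "\<not> RegFS Sig Gam (lquot (take m w') T)" if "m < j" for m
    using not_less_Least[OF that[unfolded j_def]] by blast
  have "lag_bounded Sig Gam C (take j w')"
    using before_j lag_bound by (intro lag_bounded_take_if_abs_lag_less[OF disj]) blast
  moreover have "\<not> RegFS Sig Gam (lquot (take m w) T)" if "m < j" for m
    using before_j[OF that] pre[of m] that j_le by linarith
  then have "lag_bounded Sig Gam C (take j w)"
    using lag_bound by (intro lag_bounded_take_if_abs_lag_less[OF disj]) blast
  moreover have "j = length w \<or> (\<forall>v\<in>lquot (take j w') T'. shift Sig v \<le> B)"
  proof (cases "j = length w'")
    case False
    then have "\<forall>v\<in>lquot (take j w') T. shift Sig v \<le> B"
      using j_fs w'A shift_bound by (auto dest: in_set_takeD)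
    then show ?thesis using T'T by (auto simp: lquot_def)
  qed (simp add: L)
  ultimately show ?thesis
    unfolding sync_lang_def using wA w' se j_le L by (intro CollectI conjI bexI[of _ w'] exI[of _ j]) auto
qed

lemma maxsync_eq_Int_sync_lang:
  assumes disj: "Sig \<inter> Gam = {}" and regT: "regular (Sig \<union> Gam) T"
    and T'T: "T' \<subseteq> T" and S_T': "semL Sig Gam S = semL Sig Gam T'"
    and lag_bound: "\<And>x. \<not> RegFS Sig Gam (lquot x T) \<Longrightarrow> \<bar>lag Sig Gam x\<bar> < int C"
    and shift_bound: "\<And>x v. x \<in> lists (Sig \<union> Gam) \<Longrightarrow> RegFS Sig Gam (lquot x T) \<Longrightarrow>
      v \<in> lquot x T \<Longrightarrow> shift Sig v \<le> B"
  shows "maxsync Sig Gam S T = maxsync Sig Gam T T \<inter> sync_lang Sig Gam T' C B"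
proof (intro set_eqI iffI)
  fix w assume w: "w \<in> maxsync Sig Gam S T"
  then obtain w' where "w' \<in> T'" "sem Sig Gam w' = sem Sig Gam w"
    using S_T' unfolding maxsync_def semL_def by force
  moreover have "w \<in> T" "\<forall>w'\<in>T. sem Sig Gam w' = sem Sig Gam w \<longrightarrow> preceq Sig Gam T w' w"
    using w unfolding maxsync_def by auto
  ultimately have "w \<in> sync_lang Sig Gam T' C B"
    using lag_bound shift_bound by (intro mem_sync_lang_if_maximal[OF disj regT T'T, where w' = w']) auto
  then show "w \<in> maxsync Sig Gam T T \<inter> sync_lang Sig Gam T' C B"
    using w unfolding maxsync_def semL_def by blast
next
  fix w assume w: "w \<in> maxsync Sig Gam T T \<inter> sync_lang Sig Gam T' C B"
  then obtain w' where "w' \<in> T'" "sem Sig Gam w' = sem Sig Gam w" unfolding sync_lang_def by blast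
  then have "sem Sig Gam w \<in> semL Sig Gam S" using S_T' unfolding semL_def by (metis image_eqI)
  then show "w \<in> maxsync Sig Gam S T" using w unfolding maxsync_def by blast
qed

lemma regular_maxsync_if_in_Rel:
  assumes "finite Sig" "finite Gam" "Sig \<inter> Gam = {}"
    and "regular (Sig \<union> Gam) T" "finite_shiftlag Sig Gam T"
    and "regular (Sig \<union> Gam) (maxsync Sig Gam T T)" "semL Sig Gam S \<in> Rel Sig Gam T"
  shows "regular (Sig \<union> Gam) (maxsync Sig Gam S T)"
proof -
  obtain T' where T': "T' \<subseteq> T" "regular (Sig \<union> Gam) T'" "semL Sig Gam S = semL Sig Gam T'"
    using assms(7) unfolding Rel_def by blast
  obtain C where lag_bound: "\<And>x. \<not> RegFS Sig Gam (lquot x T) \<Longrightarrow> \<bar>lag Sig Gam x\<bar> < int C"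
    using abs_lag_less_if_not_RegFS[OF assms(3-5)] by blast
  obtain B where shift_bound: "\<And>x v. x \<in> lists (Sig \<union> Gam) \<Longrightarrow> RegFS Sig Gam (lquot x T) \<Longrightarrow>
      v \<in> lquot x T \<Longrightarrow> shift Sig v \<le> B"
    using uniform_shift_bound_RegFS_lquot[OF assms(4)] by blast
  have "maxsync Sig Gam S T = maxsync Sig Gam T T \<inter> sync_lang Sig Gam T' C B"
    using maxsync_eq_Int_sync_lang[OF assms(3,4) T'(1,3)] lag_bound shift_bound by blast
  then show ?thesis
    using regular_Int[OF assms(6) regular_sync_lang[OF assms(3) T'(2) assms(1,2)]] by simp
qed

theorem mainTheorem14:
  fixes Sig Gam :: "'a set" and S T :: "'a list set"
  assumes "finite Sig" and "finite Gam" and "Sig \<inter> Gam = {}"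
    and "regular (Sig \<union> Gam) S" and "regular (Sig \<union> Gam) T"
    and "finite_shiftlag Sig Gam S" and "finite_shiftlag Sig Gam T"
    and "regular (Sig \<union> Gam) (maxsync Sig Gam T T)"
  shows "semL Sig Gam S \<in> Rel Sig Gam T \<longleftrightarrow>
         regular (Sig \<union> Gam) (maxsync Sig Gam S T) \<and> semL Sig Gam S \<subseteq> semL Sig Gam T"
proof
  assume rel: "semL Sig Gam S \<in> Rel Sig Gam T"
  then have "semL Sig Gam S \<subseteq> semL Sig Gam T" unfolding Rel_def semL_def by blast
  then show "regular (Sig \<union> Gam) (maxsync Sig Gam S T) \<and> semL Sig Gam S \<subseteq> semL Sig Gam T"
    using regular_maxsync_if_in_Rel[OF assms(1-3,5,7,8) rel] by blast
next
  assume "regular (Sig \<union> Gam) (maxsync Sig Gam S T) \<and> semL Sig Gam S \<subseteq> semL Sig Gam T"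
  then show "semL Sig Gam S \<in> Rel Sig Gam T"
    using in_Rel_if_regular_maxsync[OF assms(3,5)] by blast
qed

end
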